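(* Let $R=k[x_1,\dots,x_n]$ with the standard grading, let $G$ be a group acting on $R$ by permuting the variables, and let $I\subset R$ be a homogeneous ideal. Assume that every monomial initial ideal of $I$ is generated in degrees $\le d$. If $G$ acts monomially on $I$ up to degree $d$, then the action of $G$ on weight vectors induces automorphisms of the Gröbner fan of $I$: for each $g\in G$, the map $w\mapsto g(w)$ sends each equivalence class $C[w]$ onto an equivalence class $C[w']$, hence maps the Gröbner fan of $I$ onto itself.
   Context: For $h\in R$, $\mathrm{mon}(h)$ is the set of monomials appearing in $h$ with nonzero coefficient. $G$ acts monomially on $I$ up to degree $d$ if for every $h\in I$ of degree $\le d$ and every $g\in G$ there is $h'\in I$ with $\mathrm{mon}(h')=\mathrm{mon}(g(h))$. Writing $g(x_i)=x_{g(i)}$, for $w=(w_1,\dots,w_n)\in\mathbb{R}^n$ set $g(w)=(w_{g(1)},\dots,w_{g(n)})$. For $w\in\mathbb{R}^n$, $\mathrm{in}_w(I)$ is the ideal generated by the $w$-initial forms of elements of $I$, $C[w]=\{w'\in\mathbb{R}^n:\mathrm{in}_{w'}(I)=\mathrm{in}_w(I)\}$, and the Gröbner fan of $I$ is the fan formed by the closures of the sets $C[w]$. *)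

theory Defs
  imports "HOL-Analysis.Analysis" "HOL-Library.Poly_Mapping"
begin

type_synonym 'n monom = "'n \<Rightarrow>\<^sub>0 nat"
type_synonym ('n, 'k) mpoly = "'n monom \<Rightarrow>\<^sub>0 'k"

definition mon :: "('n, 'k::zero) mpoly \<Rightarrow> 'n monom set" where
  "mon h = Poly_Mapping.keys h"

definition monom_deg :: "('n::finite) monom \<Rightarrow> nat" where
  "monom_deg m = (\<Sum>i\<in>UNIV. Poly_Mapping.lookup m i)"

definition deg_le :: "('n::finite, 'k::zero) mpoly \<Rightarrow> nat \<Rightarrow> bool" where
  "deg_le h d \<longleftrightarrow> (\<forall>m\<in>mon h. monom_deg m \<le> d)"

definition is_ideal :: "('n, 'k::comm_ring_1) mpoly set \<Rightarrow> bool" where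
  "is_ideal I \<longleftrightarrow> 0 \<in> I \<and> (\<forall>f\<in>I. \<forall>g\<in>I. f + g \<in> I) \<and> (\<forall>f\<in>I. \<forall>r. r * f \<in> I)"

definition ideal_gen :: "('n, 'k::comm_ring_1) mpoly set \<Rightarrow> ('n, 'k) mpoly set" where
  "ideal_gen S = \<Inter> {J. is_ideal J \<and> S \<subseteq> J}"

definition hcomp :: "nat \<Rightarrow> ('n::finite, 'k::zero) mpoly \<Rightarrow> ('n, 'k) mpoly" where
  "hcomp e h = Abs_poly_mapping (\<lambda>m. if monom_deg m = e then Poly_Mapping.lookup h m else 0)"

definition homogeneous_ideal :: "('n::finite, 'k::comm_ring_1) mpoly set \<Rightarrow> bool" where
  "homogeneous_ideal I \<longleftrightarrow> is_ideal I \<and> (\<forall>h\<in>I. \<forall>e. hcomp e h \<in> I)"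

definition generated_in_degrees_le :: "('n::finite, 'k::comm_ring_1) mpoly set \<Rightarrow> nat \<Rightarrow> bool" where
  "generated_in_degrees_le J d \<longleftrightarrow> J = ideal_gen {f\<in>J. deg_le f d}"

definition term_order :: "('n monom \<Rightarrow> 'n monom \<Rightarrow> bool) \<Rightarrow> bool" where
  "term_order le \<longleftrightarrow>
     (\<forall>a. le a a) \<and> (\<forall>a b. le a b \<and> le b a \<longrightarrow> a = b) \<and>
     (\<forall>a b c. le a b \<and> le b c \<longrightarrow> le a c) \<and> (\<forall>a b. le a b \<or> le b a) \<and>
     (\<forall>a. le 0 a) \<and> (\<forall>a b c. le a b \<longrightarrow> le (a + c) (b + c))"

definition lead_mon :: "('n monom \<Rightarrow> 'n monom \<Rightarrow> bool) \<Rightarrow> ('n, 'k::zero) mpoly \<Rightarrow> 'n monom" where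
  "lead_mon le f = (THE m. m \<in> mon f \<and> (\<forall>m'\<in>mon f. le m' m))"

definition init_ideal_to :: "('n monom \<Rightarrow> 'n monom \<Rightarrow> bool) \<Rightarrow> ('n, 'k::comm_ring_1) mpoly set \<Rightarrow> ('n, 'k) mpoly set" where
  "init_ideal_to le I = ideal_gen {Poly_Mapping.single (lead_mon le f) 1 | f. f \<in> I \<and> f \<noteq> 0}"

definition monomial_initial_ideals :: "('n, 'k::comm_ring_1) mpoly set \<Rightarrow> ('n, 'k) mpoly set set" where
  "monomial_initial_ideals I = {init_ideal_to le I | le. term_order le}"

definition wt :: "real ^ ('n::finite) \<Rightarrow> 'n monom \<Rightarrow> real" where
  "wt w m = (\<Sum>i\<in>UNIV. w $ i * real (Poly_Mapping.lookup m i))"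

definition init_form :: "real ^ ('n::finite) \<Rightarrow> ('n, 'k::zero) mpoly \<Rightarrow> ('n, 'k) mpoly" where
  "init_form w f = Abs_poly_mapping (\<lambda>m.
      if m \<in> mon f \<and> (\<forall>m'\<in>mon f. wt w m' \<le> wt w m) then Poly_Mapping.lookup f m else 0)"

definition init_ideal :: "real ^ ('n::finite) \<Rightarrow> ('n, 'k::comm_ring_1) mpoly set \<Rightarrow> ('n, 'k) mpoly set" where
  "init_ideal w I = ideal_gen (init_form w ` I)"

definition Ccone :: "('n::finite, 'k::comm_ring_1) mpoly set \<Rightarrow> real ^ 'n \<Rightarrow> (real ^ 'n) set" where
  "Ccone I w = {w'. init_ideal w' I = init_ideal w I}"

definition groebner_fan :: "('n::finite, 'k::comm_ring_1) mpoly set \<Rightarrow> (real ^ 'n) set set" where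
  "groebner_fan I = {closure (Ccone I w) | w. True}"

text \<open>Action of a permutation g of the variables: g(x_i) = x_(g i).\<close>
definition act_mon :: "('n \<Rightarrow> 'n) \<Rightarrow> 'n monom \<Rightarrow> 'n monom" where
  "act_mon g m = Poly_Mapping.map_key (inv g) m"

definition act_poly :: "('n \<Rightarrow> 'n) \<Rightarrow> ('n, 'k::zero) mpoly \<Rightarrow> ('n, 'k) mpoly" where
  "act_poly g h = Poly_Mapping.map_key (act_mon (inv g)) h"

definition act_wt :: "('n::finite \<Rightarrow> 'n) \<Rightarrow> real ^ 'n \<Rightarrow> real ^ 'n" where
  "act_wt g w = (\<chi> i. w $ g i)"

definition perm_group :: "('n \<Rightarrow> 'n) set \<Rightarrow> bool" where
  "perm_group G \<longleftrightarrow> id \<in> G \<and> (\<forall>g\<in>G. bij g \<and> inv g \<in> G) \<and> (\<forall>g\<in>G. \<forall>h\<in>G. g \<circ> h \<in> G)"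

definition acts_monomially_upto :: "('n \<Rightarrow> 'n) set \<Rightarrow> ('n::finite, 'k::comm_ring_1) mpoly set \<Rightarrow> nat \<Rightarrow> bool" where
  "acts_monomially_upto G I d \<longleftrightarrow>
     (\<forall>h\<in>I. deg_le h d \<longrightarrow> (\<forall>g\<in>G. \<exists>h'\<in>I. mon h' = mon (act_poly g h)))"

end

theory Submission
  imports Defs
begin

(* It suffices to show that in_w1(I) = in_w2(I) implies in_(g w1)(I) = in_(g w2)(I):
   then g maps each class C[w] onto C[g w] and, being a linear bijection, maps closures of
   classes onto closures of classes.

   Comparing with a term order that refines v shows that every in_v(I) is generated by the
   initial forms of forms of degree at most d. An initial form of a form F of degree e lies in
   an ideal as soon as every such F shares its leading monomial (for the refined order) with an
   element of I whose initial form lies there. To find that element, g^-1 moves the support of F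
   onto the support of an element of I, since the action is monomial up to degree d. Its
   leading monomial a has a reduced element r in I, whose support contains no other leading
   monomial of degree e. Since in_w1(I) = in_w2(I), the weights w1 and w2 produce the same
   leading monomials and hence select the same initial form of r; and g moves the support of r
   back to an element of I on which g w1 and g w2 select the same initial form. Only supports
   are ever transported, which is all that a monomial action provides. *)

lemma lookup_single_mult:
  fixes m k :: "'a::cancel_comm_monoid_add"
  shows "Poly_Mapping.lookup (Poly_Mapping.single m c * p) (m + k) = (c::'b::comm_semiring_1) * Poly_Mapping.lookup p k"
proof -
  have "Poly_Mapping.lookup (Poly_Mapping.single m c * p) (m + k)
      = Sum_any (\<lambda>l. Poly_Mapping.lookup (Poly_Mapping.single m c) l * Sum_any (\<lambda>q. Poly_Mapping.lookup p q when m + k = l + q))"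
    by (rule lookup_mult)
  also have "\<dots> = c * Sum_any (\<lambda>q. Poly_Mapping.lookup p q when m + k = m + q)"
    by (simp add: lookup_single when_mult)
  also have "\<dots> = c * Poly_Mapping.lookup p k"
    by simp
  finally show ?thesis .
qed

lemma lookup_single_zero_mult:
  "Poly_Mapping.lookup (Poly_Mapping.single (0::'a::cancel_comm_monoid_add) c * p) x = (c::'b::comm_semiring_1) * Poly_Mapping.lookup p x"
  using lookup_single_mult[of 0 c p x] by simp

lemma keys_single_mult_subset:
  "Poly_Mapping.keys (Poly_Mapping.single m (c::'b::comm_semiring_1) * p) \<subseteq> (+) (m::'a::cancel_comm_monoid_add) ` Poly_Mapping.keys p"
  using keys_mult[of "Poly_Mapping.single m c" p] by (auto split: if_splits)

lemma keys_single_mult: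
  assumes "(c::'b::{comm_semiring_1,semiring_no_zero_divisors}) \<noteq> 0"
  shows "Poly_Mapping.keys (Poly_Mapping.single m c * p) = (+) (m::'a::cancel_comm_monoid_add) ` Poly_Mapping.keys p"
  using keys_single_mult_subset[of m c p] assms by (auto simp: in_keys_iff lookup_single_mult)

lemma poly_mapping_sum_single:
  "p = (\<Sum>m\<in>Poly_Mapping.keys p. Poly_Mapping.single m (Poly_Mapping.lookup p m))"
  by (rule poly_mapping_eqI) (simp add: lookup_sum lookup_single when_def in_keys_iff)

definition restrict_mons :: "('a \<Rightarrow> bool) \<Rightarrow> ('a \<Rightarrow>\<^sub>0 'b::zero) \<Rightarrow> 'a \<Rightarrow>\<^sub>0 'b" where
  "restrict_mons P h = Abs_poly_mapping (\<lambda>m. if P m then Poly_Mapping.lookup h m else 0)"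

lemma lookup_restrict_mons [simp]:
  "Poly_Mapping.lookup (restrict_mons P h) m = (if P m then Poly_Mapping.lookup h m else 0)"
proof -
  have "finite {m. (if P m then Poly_Mapping.lookup h m else 0) \<noteq> 0}"
    by (rule finite_subset[of _ "Poly_Mapping.keys h"]) (auto simp: in_keys_iff)
  then show ?thesis unfolding restrict_mons_def by simp
qed

lemma keys_restrict_mons [simp]: "Poly_Mapping.keys (restrict_mons P h) = {m \<in> Poly_Mapping.keys h. P m}"
  by (auto simp: in_keys_iff split: if_splits)

lemma restrict_mons_zero [simp]: "restrict_mons P 0 = 0"
  by (rule poly_mapping_eqI) simp

lemma restrict_mons_add: "restrict_mons P (a + b) = restrict_mons P a + restrict_mons P b"
  by (rule poly_mapping_eqI) (simp add: lookup_add)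

lemma restrict_mons_diff: "restrict_mons P (a - b) = restrict_mons P a - restrict_mons P (b::'a \<Rightarrow>\<^sub>0 'b::ab_group_add)"
  by (rule poly_mapping_eqI) (simp add: lookup_minus)

lemma hcomp_eq_restrict_mons: "hcomp e h = restrict_mons (\<lambda>m. monom_deg m = e) h"
  unfolding hcomp_def restrict_mons_def ..

lemma keys_hcomp: "Poly_Mapping.keys (hcomp e f) = {m \<in> Poly_Mapping.keys f. monom_deg m = e}"
  by (simp add: hcomp_eq_restrict_mons)

lemma poly_mapping_sum_hcomp: "p = (\<Sum>e\<in>monom_deg ` Poly_Mapping.keys p. hcomp e p)"
proof (rule poly_mapping_eqI)
  fix x
  have "Poly_Mapping.lookup (\<Sum>e\<in>monom_deg ` Poly_Mapping.keys p. hcomp e p) x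
      = (if monom_deg x \<in> monom_deg ` Poly_Mapping.keys p then Poly_Mapping.lookup p x else 0)"
    by (simp add: lookup_sum hcomp_eq_restrict_mons sum.delta')
  also have "\<dots> = Poly_Mapping.lookup p x"
    by (auto simp: in_keys_iff)
  finally show "Poly_Mapping.lookup p x = Poly_Mapping.lookup (\<Sum>e\<in>monom_deg ` Poly_Mapping.keys p. hcomp e p) x"
    by simp
qed

definition homog :: "nat \<Rightarrow> ('n::finite, 'k::zero) mpoly \<Rightarrow> bool" where
  "homog e f \<longleftrightarrow> (\<forall>m\<in>Poly_Mapping.keys f. monom_deg m = e)"

lemma homog_hcomp: "homog e (hcomp e f)"
  unfolding homog_def by (simp add: keys_hcomp)

lemma homog_subset: "homog e f \<Longrightarrow> Poly_Mapping.keys g \<subseteq> Poly_Mapping.keys f \<Longrightarrow> homog e g"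
  unfolding homog_def by blast

lemma homog_diff: "homog e f \<Longrightarrow> homog e g \<Longrightarrow> homog e (f - g)"
  unfolding homog_def using keys_diff[of f g] by blast

lemma homogeneous_ideal_is_ideal: "homogeneous_ideal I \<Longrightarrow> is_ideal I"
  unfolding homogeneous_ideal_def by blast

lemma homogeneous_ideal_hcomp: "homogeneous_ideal I \<Longrightarrow> f \<in> I \<Longrightarrow> hcomp e f \<in> I"
  unfolding homogeneous_ideal_def by blast

lemma monom_deg_add: "monom_deg (a + b) = monom_deg a + monom_deg b"
  unfolding monom_deg_def by (simp add: lookup_add sum.distrib)

lemma finite_monom_deg_eq: "finite {m :: ('n::finite) monom. monom_deg m = e}"
proof -
  have "Poly_Mapping.lookup m i \<le> monom_deg m" for m :: "'n monom" and i
    unfolding monom_deg_def by (rule member_le_sum) auto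
  then have "Poly_Mapping.lookup ` {m :: 'n monom. monom_deg m = e} \<subseteq> {f. \<forall>i. f i \<le> e}"
    by auto
  moreover have "finite {f :: 'n \<Rightarrow> nat. \<forall>i. f i \<le> e}"
    using finite_set_of_finite_funs[of "UNIV :: 'n set" "{..e}"] by simp
  ultimately have "finite (Poly_Mapping.lookup ` {m :: 'n monom. monom_deg m = e})"
    by (rule finite_subset)
  then show ?thesis
    by (rule finite_imageD) (simp add: inj_on_def poly_mapping_eqI)
qed

lemma is_ideal_ideal_gen: "is_ideal (ideal_gen S)"
  unfolding ideal_gen_def is_ideal_def by blast

lemma ideal_gen_superset: "S \<subseteq> ideal_gen S"
  unfolding ideal_gen_def by blast

lemma ideal_gen_least: "is_ideal J \<Longrightarrow> S \<subseteq> J \<Longrightarrow> ideal_gen S \<subseteq> J"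
  unfolding ideal_gen_def by blast

lemma is_ideal_zero: "is_ideal J \<Longrightarrow> 0 \<in> J"
  unfolding is_ideal_def by blast

lemma is_ideal_add: "is_ideal J \<Longrightarrow> f \<in> J \<Longrightarrow> h \<in> J \<Longrightarrow> f + h \<in> J"
  unfolding is_ideal_def by blast

lemma is_ideal_mult: "is_ideal J \<Longrightarrow> f \<in> J \<Longrightarrow> r * f \<in> J"
  unfolding is_ideal_def by blast

lemma is_ideal_diff_mult:
  assumes "is_ideal J" "f \<in> J" "h \<in> J"
  shows "f - r * h \<in> J"
proof -
  have "f - r * h = f + (- r) * h" by simp
  then show ?thesis using is_ideal_add[OF assms(1,2) is_ideal_mult[OF assms(1,3), of "- r"]] by simp
qed

lemma is_ideal_sum:
  assumes "is_ideal J" "finite A" "\<And>a. a \<in> A \<Longrightarrow> F a \<in> J"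
  shows "sum F A \<in> J"
  using assms(2,3) by induction (simp_all add: is_ideal_zero[OF assms(1)] is_ideal_add[OF assms(1)])

lemma is_ideal_if_closed_single_mult:
  fixes J :: "('n, 'k::comm_ring_1) mpoly set"
  assumes zero: "0 \<in> J" and add: "\<And>f h. f \<in> J \<Longrightarrow> h \<in> J \<Longrightarrow> f + h \<in> J"
    and single_mult: "\<And>f m c. f \<in> J \<Longrightarrow> Poly_Mapping.single m c * f \<in> J"
  shows "is_ideal J"
proof -
  have "r * f \<in> J" if "f \<in> J" for r f
  proof -
    have "(\<Sum>m\<in>A. Poly_Mapping.single m (Poly_Mapping.lookup r m) * f) \<in> J" if "finite A" for A
      using that by induction (simp_all add: zero add single_mult \<open>f \<in> J\<close>)
    moreover have "r * f = (\<Sum>m\<in>Poly_Mapping.keys r. Poly_Mapping.single m (Poly_Mapping.lookup r m) * f)"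
      by (subst poly_mapping_sum_single[of r]) (simp add: sum_distrib_right)
    ultimately show ?thesis by simp
  qed
  then show ?thesis unfolding is_ideal_def using zero add by blast
qed

lemma keys_ideal_gen_multiple:
  assumes "f \<in> ideal_gen S" "m \<in> Poly_Mapping.keys f"
  obtains s a c where "s \<in> S" "a \<in> Poly_Mapping.keys s" "m = c + a"
proof -
  define U where "U = {c + a | a c s. s \<in> S \<and> a \<in> Poly_Mapping.keys s}"
  have add: "Poly_Mapping.keys (p + q) \<subseteq> U" if "Poly_Mapping.keys p \<subseteq> U" "Poly_Mapping.keys q \<subseteq> U" for p q
    using keys_add[of p q] that by blast
  have mult: "Poly_Mapping.keys (r * p) \<subseteq> U" if p: "Poly_Mapping.keys p \<subseteq> U" for r p
  proof
    fix x assume "x \<in> Poly_Mapping.keys (r * p)"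
    then obtain b b' where "x = b' + b" "b \<in> Poly_Mapping.keys p"
      using keys_mult[of r p] by blast
    moreover from this obtain a c s where "b = c + a" "s \<in> S" "a \<in> Poly_Mapping.keys s"
      using p unfolding U_def by blast
    ultimately have "x = (b' + c) + a" by (simp add: add.assoc)
    then show "x \<in> U" using \<open>s \<in> S\<close> \<open>a \<in> Poly_Mapping.keys s\<close> unfolding U_def by blast
  qed
  have "is_ideal {f. Poly_Mapping.keys f \<subseteq> U}"
    unfolding is_ideal_def by (simp add: add mult)
  moreover have "a \<in> U" if "s \<in> S" "a \<in> Poly_Mapping.keys s" for s a
  proof -
    have "a = 0 + a" by simp
    then show ?thesis using that unfolding U_def by blast
  qed
  then have "S \<subseteq> {f. Poly_Mapping.keys f \<subseteq> U}" by blast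
  ultimately have "Poly_Mapping.keys f \<subseteq> U"
    using assms(1) ideal_gen_least[of "{f. Poly_Mapping.keys f \<subseteq> U}" S] by blast
  then show ?thesis using assms(2) that unfolding U_def by blast
qed

lemma init_form_in_init_ideal: "f \<in> I \<Longrightarrow> init_form w f \<in> init_ideal w I"
  unfolding init_ideal_def using ideal_gen_superset by blast

lemma is_ideal_init_ideal: "is_ideal (init_ideal w I)"
  unfolding init_ideal_def by (rule is_ideal_ideal_gen)

definition cancel_at :: "'n monom \<Rightarrow> ('n, 'k::field) mpoly \<Rightarrow> ('n, 'k) mpoly \<Rightarrow> ('n, 'k) mpoly" where
  "cancel_at b f g = f - Poly_Mapping.single 0 (Poly_Mapping.lookup f b / Poly_Mapping.lookup g b) * g"

lemma lookup_cancel_at: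
  "Poly_Mapping.lookup (cancel_at b f g) m
     = Poly_Mapping.lookup f m - Poly_Mapping.lookup f b / Poly_Mapping.lookup g b * Poly_Mapping.lookup g m"
  unfolding cancel_at_def by (simp add: lookup_minus lookup_single_zero_mult)

lemma lookup_cancel_at_self: "b \<in> Poly_Mapping.keys g \<Longrightarrow> Poly_Mapping.lookup (cancel_at b f g) b = 0"
  by (simp add: lookup_cancel_at in_keys_iff)

lemma lookup_cancel_at_other: "m \<notin> Poly_Mapping.keys g \<Longrightarrow> Poly_Mapping.lookup (cancel_at b f g) m = Poly_Mapping.lookup f m"
  by (simp add: lookup_cancel_at in_keys_iff)

lemma keys_cancel_at_subset: "Poly_Mapping.keys (cancel_at b f g) \<subseteq> Poly_Mapping.keys f \<union> Poly_Mapping.keys g"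
  by (auto simp: in_keys_iff lookup_cancel_at)

lemma cancel_at_in_ideal: "is_ideal J \<Longrightarrow> f \<in> J \<Longrightarrow> g \<in> J \<Longrightarrow> cancel_at b f g \<in> J"
  unfolding cancel_at_def by (rule is_ideal_diff_mult)

lemma homog_cancel_at: "homog e f \<Longrightarrow> homog e g \<Longrightarrow> homog e (cancel_at b f g)"
  unfolding homog_def using keys_cancel_at_subset[of b f g] by blast

section \<open>Weight components and initial forms\<close>

lemma wt_add: "wt w (a + b) = wt w a + wt w b"
  unfolding wt_def by (simp add: lookup_add sum.distrib distrib_left)

lemma wt_zero [simp]: "wt w 0 = 0"
  unfolding wt_def by simp

definition wt_comp :: "real ^ ('n::finite) \<Rightarrow> real \<Rightarrow> ('n, 'k::zero) mpoly \<Rightarrow> ('n, 'k) mpoly" where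
  "wt_comp w t h = restrict_mons (\<lambda>m. wt w m = t) h"

lemma keys_wt_comp: "Poly_Mapping.keys (wt_comp w t h) = {m \<in> Poly_Mapping.keys h. wt w m = t}"
  by (simp add: wt_comp_def)

lemma wt_comp_add: "wt_comp w t (a + b) = wt_comp w t a + wt_comp w t b"
  unfolding wt_comp_def by (rule restrict_mons_add)

lemma wt_comp_diff: "wt_comp w t (a - b) = wt_comp w t a - wt_comp w t (b :: ('n::finite, 'k::ab_group_add) mpoly)"
  unfolding wt_comp_def by (rule restrict_mons_diff)

lemma wt_comp_wt_comp: "wt_comp w t (wt_comp w s h) = (if s = t then wt_comp w t h else 0)"
  unfolding wt_comp_def by (rule poly_mapping_eqI) auto

lemma wt_comp_single_mult:
  "wt_comp w t (Poly_Mapping.single m c * h) = Poly_Mapping.single m (c::'k::comm_semiring_1) * wt_comp w (t - wt w m) h"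
proof (rule poly_mapping_eqI)
  fix x
  show "Poly_Mapping.lookup (wt_comp w t (Poly_Mapping.single m c * h)) x =
        Poly_Mapping.lookup (Poly_Mapping.single m c * wt_comp w (t - wt w m) h) x"
  proof (cases "x \<in> range ((+) m)")
    case True
    then obtain k where "x = m + k" by blast
    then show ?thesis by (simp add: wt_comp_def lookup_single_mult wt_add)
  next
    case False
    then have "x \<notin> Poly_Mapping.keys (Poly_Mapping.single m c * h)"
      "x \<notin> Poly_Mapping.keys (Poly_Mapping.single m c * wt_comp w (t - wt w m) h)"
      using keys_single_mult_subset by blast+
    then show ?thesis by (simp add: wt_comp_def in_keys_iff)
  qed
qed

lemma hcomp_wt_comp: "hcomp e (wt_comp w t f) = wt_comp w t (hcomp e f)"
  by (rule poly_mapping_eqI) (simp add: hcomp_eq_restrict_mons wt_comp_def)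

definition max_wt_mons :: "real ^ ('n::finite) \<Rightarrow> 'n monom set \<Rightarrow> 'n monom set" where
  "max_wt_mons w S = {m \<in> S. \<forall>m'\<in>S. wt w m' \<le> wt w m}"

lemma max_wt_mons_image:
  "(\<And>a. wt v (\<phi> a) = wt w a) \<Longrightarrow> max_wt_mons v (\<phi> ` S) = \<phi> ` max_wt_mons w S"
  unfolding max_wt_mons_def by auto

lemma init_form_eq_restrict_mons: "init_form w f = restrict_mons (\<lambda>m. m \<in> max_wt_mons w (Poly_Mapping.keys f)) f"
  unfolding init_form_def restrict_mons_def max_wt_mons_def mon_def by simp

lemma keys_init_form: "Poly_Mapping.keys (init_form w f) = max_wt_mons w (Poly_Mapping.keys f)"
  unfolding init_form_eq_restrict_mons by (auto simp: max_wt_mons_def)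

lemma keys_init_form_subset: "Poly_Mapping.keys (init_form w f) \<subseteq> Poly_Mapping.keys f"
  by (auto simp: keys_init_form max_wt_mons_def)

lemma init_form_eq_iff:
  "init_form w1 f = init_form w2 f \<longleftrightarrow> max_wt_mons w1 (Poly_Mapping.keys f) = max_wt_mons w2 (Poly_Mapping.keys f)"
proof
  assume "init_form w1 f = init_form w2 f"
  then show "max_wt_mons w1 (Poly_Mapping.keys f) = max_wt_mons w2 (Poly_Mapping.keys f)"
    by (metis keys_init_form)
qed (simp add: init_form_eq_restrict_mons)

lemma init_form_eq_wt_comp:
  assumes "\<And>m. m \<in> Poly_Mapping.keys f \<Longrightarrow> wt w m \<le> t" "m0 \<in> Poly_Mapping.keys f" "wt w m0 = t"
  shows "init_form w f = wt_comp w t f"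
proof -
  have "max_wt_mons w (Poly_Mapping.keys f) = {m \<in> Poly_Mapping.keys f. wt w m = t}"
    using assms unfolding max_wt_mons_def by force
  then show ?thesis unfolding init_form_eq_restrict_mons wt_comp_def
    by (intro poly_mapping_eqI) (auto simp: in_keys_iff)
qed

definition max_wt :: "real ^ ('n::finite) \<Rightarrow> ('n, 'k::zero) mpoly \<Rightarrow> real" where
  "max_wt w f = Max (wt w ` Poly_Mapping.keys f)"

lemma wt_le_max_wt: "m \<in> Poly_Mapping.keys f \<Longrightarrow> wt w m \<le> max_wt w f"
  unfolding max_wt_def by (intro Max_ge) auto

lemma ex_wt_eq_max_wt:
  assumes "f \<noteq> 0"
  obtains m where "m \<in> Poly_Mapping.keys f" "wt w m = max_wt w f"
proof -
  have "max_wt w f \<in> wt w ` Poly_Mapping.keys f"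
    unfolding max_wt_def using assms by (intro Max_in) auto
  then show ?thesis using that by auto
qed

lemma init_form_zero [simp]: "init_form w 0 = 0"
  by (simp add: init_form_eq_restrict_mons)

lemma init_form_eq_wt_comp_max_wt: "init_form w f = wt_comp w (max_wt w f) f"
proof (cases "f = 0")
  case True
  then show ?thesis by (simp add: init_form_eq_restrict_mons wt_comp_def)
next
  case False
  then obtain m0 where "m0 \<in> Poly_Mapping.keys f" "wt w m0 = max_wt w f"
    by (rule ex_wt_eq_max_wt)
  then show ?thesis by (intro init_form_eq_wt_comp wt_le_max_wt)
qed

lemma init_form_eq_zero_iff [simp]: "init_form w f = 0 \<longleftrightarrow> f = 0"
proof
  assume "init_form w f = 0"
  then have "max_wt_mons w (Poly_Mapping.keys f) = {}"
    using keys_init_form[of w f] by simp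
  show "f = 0"
  proof (rule ccontr)
    assume "f \<noteq> 0"
    then obtain m where "m \<in> Poly_Mapping.keys f" "wt w m = max_wt w f"
      by (rule ex_wt_eq_max_wt)
    then have "m \<in> max_wt_mons w (Poly_Mapping.keys f)"
      by (auto simp: max_wt_mons_def wt_le_max_wt)
    then show False using \<open>max_wt_mons w (Poly_Mapping.keys f) = {}\<close> by simp
  qed
qed (simp add: init_form_eq_restrict_mons)

lemma wt_comp_init_form: "wt_comp w t (init_form w f) = (if t = max_wt w f then init_form w f else 0)"
  by (simp add: init_form_eq_wt_comp_max_wt wt_comp_wt_comp)

lemma init_form_single_mult:
  fixes f :: "('n::finite, 'k::idom) mpoly"
  assumes "c \<noteq> 0"
  shows "init_form w (Poly_Mapping.single m c * f) = Poly_Mapping.single m c * init_form w f"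
proof (cases "f = 0")
  case True
  then show ?thesis by simp
next
  case False
  then obtain m0 where m0: "m0 \<in> Poly_Mapping.keys f" "wt w m0 = max_wt w f"
    by (rule ex_wt_eq_max_wt)
  have keys: "Poly_Mapping.keys (Poly_Mapping.single m c * f) = (+) m ` Poly_Mapping.keys f"
    using assms by (rule keys_single_mult)
  have "init_form w (Poly_Mapping.single m c * f) = wt_comp w (wt w m + max_wt w f) (Poly_Mapping.single m c * f)"
    using m0 by (intro init_form_eq_wt_comp) (auto simp: keys wt_add wt_le_max_wt)
  also have "\<dots> = Poly_Mapping.single m c * init_form w f"
    by (simp add: wt_comp_single_mult init_form_eq_wt_comp_max_wt)
  finally show ?thesis .
qed

lemma init_form_add_eq_max_wt:
  assumes "f1 \<noteq> 0" "f2 \<noteq> 0" "max_wt w f1 = max_wt w f2"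
  shows "init_form w f1 + init_form w f2 = 0 \<or> init_form w f1 + init_form w f2 = init_form w (f1 + f2)"
proof -
  let ?t = "max_wt w f1"
  have sum: "init_form w f1 + init_form w f2 = wt_comp w ?t (f1 + f2)"
    using assms(3) by (simp add: init_form_eq_wt_comp_max_wt wt_comp_add)
  have "init_form w (f1 + f2) = wt_comp w ?t (f1 + f2)" if "m0 \<in> Poly_Mapping.keys (wt_comp w ?t (f1 + f2))" for m0
  proof (rule init_form_eq_wt_comp)
    show "wt w m \<le> ?t" if "m \<in> Poly_Mapping.keys (f1 + f2)" for m
      using that keys_add[of f1 f2] wt_le_max_wt[of m f1 w] wt_le_max_wt[of m f2 w] assms(3) by auto
  qed (use that in \<open>auto simp: keys_wt_comp\<close>)
  then show ?thesis using sum by (metis keys_eq_empty ex_in_conv)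
qed

lemma hcomp_init_form:
  assumes "hcomp e (init_form w f) \<noteq> 0"
  shows "hcomp e (init_form w f) = init_form w (hcomp e f)"
proof -
  let ?t = "max_wt w f"
  have eq: "hcomp e (init_form w f) = wt_comp w ?t (hcomp e f)"
    unfolding init_form_eq_wt_comp_max_wt[of w f] by (rule hcomp_wt_comp)
  then obtain m0 where m0: "m0 \<in> Poly_Mapping.keys (wt_comp w ?t (hcomp e f))"
    using assms by (metis keys_eq_empty ex_in_conv)
  have "init_form w (hcomp e f) = wt_comp w ?t (hcomp e f)"
  proof (rule init_form_eq_wt_comp)
    show "\<And>m. m \<in> Poly_Mapping.keys (hcomp e f) \<Longrightarrow> wt w m \<le> ?t"
      by (auto simp: keys_hcomp wt_le_max_wt)
  qed (use m0 in \<open>auto simp: keys_wt_comp\<close>)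
  then show ?thesis using eq by simp
qed

definition lin_ord :: "('a \<Rightarrow> 'a \<Rightarrow> bool) \<Rightarrow> bool" where
  "lin_ord le \<longleftrightarrow> (\<forall>a. le a a) \<and> (\<forall>a b. le a b \<and> le b a \<longrightarrow> a = b) \<and>
     (\<forall>a b c. le a b \<and> le b c \<longrightarrow> le a c) \<and> (\<forall>a b. le a b \<or> le b a)"

lemma term_order_lin_ord: "term_order le \<Longrightarrow> lin_ord le"
  unfolding term_order_def lin_ord_def by blast

lemma lin_ord_refl: "lin_ord le \<Longrightarrow> le a a"
  and lin_ord_antisym: "lin_ord le \<Longrightarrow> le a b \<Longrightarrow> le b a \<Longrightarrow> a = b"
  and lin_ord_trans: "lin_ord le \<Longrightarrow> le a b \<Longrightarrow> le b c \<Longrightarrow> le a c"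
  and lin_ord_total: "lin_ord le \<Longrightarrow> le a b \<or> le b a"
  unfolding lin_ord_def by blast+

lemma lin_ord_inv_image: "lin_ord le \<Longrightarrow> inj \<psi> \<Longrightarrow> lin_ord (\<lambda>a b. le (\<psi> a) (\<psi> b))"
  unfolding lin_ord_def inj_def by blast

lemma lin_ord_has_greatest:
  assumes "lin_ord le" "finite S" "S \<noteq> {}"
  shows "\<exists>m\<in>S. \<forall>m'\<in>S. le m' m"
  using assms(2,3)
proof (induction S rule: finite_ne_induct)
  case (singleton x)
  then show ?case using lin_ord_refl[OF assms(1)] by blast
next
  case (insert x F)
  then obtain m where m: "m \<in> F" "\<forall>m'\<in>F. le m' m" by blast
  show ?case
  proof (cases "le x m")
    case True
    then show ?thesis using m by blast
  next
    case False
    then have "le m x" using lin_ord_total[OF assms(1)] by blast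
    then show ?thesis using m lin_ord_trans[OF assms(1)] lin_ord_refl[OF assms(1)] by blast
  qed
qed

lemma lead_mon_eqI:
  assumes "lin_ord le" "m \<in> Poly_Mapping.keys f" "\<And>m'. m' \<in> Poly_Mapping.keys f \<Longrightarrow> le m' m"
  shows "lead_mon le f = m"
  unfolding lead_mon_def mon_def
  using assms lin_ord_antisym[OF assms(1)] by (intro the_equality) blast+

lemma lead_mon_greatest:
  assumes "lin_ord le" "f \<noteq> 0"
  shows "lead_mon le f \<in> Poly_Mapping.keys f" "\<And>m. m \<in> Poly_Mapping.keys f \<Longrightarrow> le m (lead_mon le f)"
proof -
  obtain m where "m \<in> Poly_Mapping.keys f" "\<forall>m'\<in>Poly_Mapping.keys f. le m' m"
    using lin_ord_has_greatest[OF assms(1) finite_keys] assms(2) by auto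
  moreover from this have "lead_mon le f = m"
    using lead_mon_eqI[OF assms(1)] by blast
  ultimately show "lead_mon le f \<in> Poly_Mapping.keys f" "\<And>m. m \<in> Poly_Mapping.keys f \<Longrightarrow> le m (lead_mon le f)"
    by auto
qed

lemma lead_mon_in_keys: "lin_ord le \<Longrightarrow> f \<noteq> 0 \<Longrightarrow> lead_mon le f \<in> Poly_Mapping.keys f"
  by (rule lead_mon_greatest(1))

lemma lead_mon_ge: "lin_ord le \<Longrightarrow> m \<in> Poly_Mapping.keys f \<Longrightarrow> le m (lead_mon le f)"
  using lead_mon_greatest(2)[of le f m] by fastforce

lemma lead_mon_image:
  assumes "lin_ord le" "lin_ord le'" "f \<noteq> 0" "Poly_Mapping.keys h = \<phi> ` Poly_Mapping.keys f"
    and "\<And>a b. le' (\<phi> a) (\<phi> b) = le a b"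
  shows "lead_mon le' h = \<phi> (lead_mon le f)"
  using assms lead_mon_in_keys[OF assms(1,3)] lead_mon_ge[OF assms(1)]
  by (intro lead_mon_eqI) auto

definition refine :: "('a \<Rightarrow> real) \<Rightarrow> ('a \<Rightarrow> 'a \<Rightarrow> bool) \<Rightarrow> 'a \<Rightarrow> 'a \<Rightarrow> bool" where
  "refine V le a b \<longleftrightarrow> V a < V b \<or> (V a = V b \<and> le a b)"

lemma refine_imp_le: "refine V le a b \<Longrightarrow> V a \<le> V b"
  unfolding refine_def by auto

lemma lin_ord_refine: "lin_ord le \<Longrightarrow> lin_ord (refine V le)"
  unfolding lin_ord_def refine_def by (smt (verit))

lemma term_order_refine:
  assumes le: "term_order le" and add: "\<And>a b. V (a + b) = V a + V b" and nonneg: "\<And>a. V a \<ge> 0"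
  shows "term_order (refine V le)"
proof -
  have "V 0 = 0" using add[of 0 0] by simp
  have le0: "le 0 a" and mono: "le a b \<Longrightarrow> le (a + c) (b + c)" for a b c
    using le unfolding term_order_def by blast+
  have "refine V le 0 a" for a
    using nonneg[of a] le0[of a] \<open>V 0 = 0\<close> unfolding refine_def by auto
  moreover have "refine V le (a + c) (b + c)" if "refine V le a b" for a b c
    using that mono[of a b c] unfolding refine_def by (auto simp: add)
  ultimately show ?thesis
    using lin_ord_refine[OF term_order_lin_ord[OF le]] unfolding term_order_def lin_ord_def by blast
qed

lemma lead_mon_in_max_wt_mons:
  assumes "lin_ord le" "f \<noteq> 0"
  shows "lead_mon (refine (wt w) le) f \<in> max_wt_mons w (Poly_Mapping.keys f)"
proof -
  have O: "lin_ord (refine (wt w) le)" using assms(1) by (rule lin_ord_refine)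
  show ?thesis unfolding max_wt_mons_def
    using lead_mon_in_keys[OF O assms(2)] refine_imp_le[OF lead_mon_ge[OF O]] by blast
qed

lemma lead_init_form:
  assumes "lin_ord le" "f \<noteq> 0"
  shows "lead_mon le (init_form w f) = lead_mon (refine (wt w) le) f"
proof (rule lead_mon_eqI[OF assms(1)])
  let ?a = "lead_mon (refine (wt w) le) f"
  have a: "?a \<in> max_wt_mons w (Poly_Mapping.keys f)"
    using assms by (rule lead_mon_in_max_wt_mons)
  then show "?a \<in> Poly_Mapping.keys (init_form w f)"
    by (simp add: keys_init_form)
  fix m assume "m \<in> Poly_Mapping.keys (init_form w f)"
  then have m: "m \<in> Poly_Mapping.keys f" "wt w m = wt w ?a"
    using a by (auto simp: keys_init_form max_wt_mons_def intro: order_antisym)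
  then show "le m ?a"
    using lead_mon_ge[OF lin_ord_refine[OF assms(1), of "wt w"] m(1)] unfolding refine_def by simp
qed

lemma init_form_eq_wt_comp_lead_mon:
  assumes "lin_ord le"
  shows "init_form w f = wt_comp w (wt w (lead_mon (refine (wt w) le) f)) f"
proof (cases "f = 0")
  case True
  then show ?thesis by (simp add: wt_comp_def)
next
  case False
  have O: "lin_ord (refine (wt w) le)" using assms by (rule lin_ord_refine)
  show ?thesis
  proof (rule init_form_eq_wt_comp)
    show "lead_mon (refine (wt w) le) f \<in> Poly_Mapping.keys f"
      using O False by (rule lead_mon_in_keys)
    show "wt w m \<le> wt w (lead_mon (refine (wt w) le) f)" if "m \<in> Poly_Mapping.keys f" for m
      using refine_imp_le[OF lead_mon_ge[OF O that]] .
  qed simp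
qed

lemma zero_le_poly_mapping_nat: "0 \<le> (p :: 'a::wellorder \<Rightarrow>\<^sub>0 nat)"
proof (cases "p = 0")
  case False
  then obtain k where "Poly_Mapping.lookup p k \<noteq> 0"
    by (metis poly_mapping_eqI lookup_zero)
  then have "less_fun (Poly_Mapping.lookup 0) (Poly_Mapping.lookup p)"
    by (intro less_funI exI[of _ "LEAST k. Poly_Mapping.lookup p k \<noteq> 0"])
      (auto intro: LeastI dest: not_less_Least)
  then show ?thesis by (simp add: less_eq_poly_mapping.rep_eq)
qed simp

text \<open>A term order is pulled back from the lexicographic order on \<open>nat \<Rightarrow>\<^sub>0 nat\<close> along an
  enumeration of the variables.\<close>

lemma ex_term_order: "\<exists>le :: ('n::finite) monom \<Rightarrow> 'n monom \<Rightarrow> bool. term_order le"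
proof -
  obtain \<iota> :: "'n \<Rightarrow> nat" where \<iota>: "inj \<iota>"
    using finite_imp_inj_to_nat_seg[of "UNIV :: 'n set"] by auto
  define \<Phi> :: "'n monom \<Rightarrow> nat \<Rightarrow>\<^sub>0 nat"
    where "\<Phi> a = (\<Sum>i\<in>UNIV. Poly_Mapping.single (\<iota> i) (Poly_Mapping.lookup a i))" for a
  have lookup_\<Phi>: "Poly_Mapping.lookup (\<Phi> a) (\<iota> i) = Poly_Mapping.lookup a i" for a i
    using \<iota> by (simp add: \<Phi>_def lookup_sum lookup_single when_def inj_eq)
  have "inj \<Phi>"
    by (rule injI, rule poly_mapping_eqI) (metis lookup_\<Phi>)
  moreover have "\<Phi> (a + b) = \<Phi> a + \<Phi> b" for a b
    by (simp add: \<Phi>_def lookup_add single_add sum.distrib)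
  moreover have "\<Phi> 0 = 0"
    by (simp add: \<Phi>_def)
  ultimately have "term_order (\<lambda>a b. \<Phi> a \<le> \<Phi> b)"
    unfolding term_order_def
    by (auto simp: inj_eq zero_le_poly_mapping_nat intro: order_trans add_right_mono)
  then show ?thesis by blast
qed

text \<open>Adding a multiple of the degree makes a weight nonnegative without changing how it compares
  monomials of equal degree, so refining it by a term order gives a term order that agrees with
  \<open>refine (wt v) \<tau>\<close> on homogeneous polynomials.\<close>

definition shifted_wt :: "real ^ ('n::finite) \<Rightarrow> 'n monom \<Rightarrow> real" where
  "shifted_wt v a = wt v a + (\<Sum>i\<in>UNIV. \<bar>v $ i\<bar>) * real (monom_deg a)"

lemma shifted_wt_nonneg: "shifted_wt v a \<ge> 0"
proof -
  have "shifted_wt v a = (\<Sum>i\<in>UNIV. (v $ i + (\<Sum>j\<in>UNIV. \<bar>v $ j\<bar>)) * real (Poly_Mapping.lookup a i))"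
    unfolding shifted_wt_def wt_def monom_deg_def
    by (simp add: distrib_right sum.distrib sum_distrib_left)
  also have "\<dots> \<ge> 0"
  proof (intro sum_nonneg mult_nonneg_nonneg)
    fix i
    have "\<bar>v $ i\<bar> \<le> (\<Sum>j\<in>UNIV. \<bar>v $ j\<bar>)"
      by (rule member_le_sum) auto
    then show "v $ i + (\<Sum>j\<in>UNIV. \<bar>v $ j\<bar>) \<ge> 0" by linarith
  qed simp
  finally show ?thesis .
qed

lemma term_order_refine_shifted_wt:
  assumes "term_order \<tau>"
  shows "term_order (refine (shifted_wt v) \<tau>)"
proof (rule term_order_refine[OF assms])
  show "shifted_wt v (a + b) = shifted_wt v a + shifted_wt v b" for a b
    by (simp add: shifted_wt_def wt_add monom_deg_add distrib_left)
qed (rule shifted_wt_nonneg)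

lemma lead_mon_refine_shifted_wt:
  assumes "lin_ord \<tau>" "homog e f"
  shows "lead_mon (refine (shifted_wt v) \<tau>) f = lead_mon (refine (wt v) \<tau>) f"
proof (cases "f = 0")
  case True
  then show ?thesis by (simp add: lead_mon_def mon_def)
next
  case False
  have O: "lin_ord (refine (wt v) \<tau>)" using assms(1) by (rule lin_ord_refine)
  show ?thesis
  proof (rule lead_mon_eqI[OF lin_ord_refine[OF assms(1)] lead_mon_in_keys[OF O False]])
    fix m assume m: "m \<in> Poly_Mapping.keys f"
    then have "monom_deg m = monom_deg (lead_mon (refine (wt v) \<tau>) f)"
      using lead_mon_in_keys[OF O False] assms(2) unfolding homog_def by auto
    then show "refine (shifted_wt v) \<tau> m (lead_mon (refine (wt v) \<tau>) f)"
      using lead_mon_ge[OF O m] unfolding refine_def shifted_wt_def by auto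
  qed
qed

lemma max_wt_eq_of_wt_comp:
  assumes "wt_comp w t h = init_form w f" "f \<noteq> 0"
  shows "max_wt w f = t"
proof -
  have "wt_comp w t (init_form w f) = init_form w f"
    using wt_comp_wt_comp[of w t t h] assms(1) by simp
  then show ?thesis using assms(2) wt_comp_init_form[of w t f] by (auto split: if_splits)
qed

definition init_form_comps :: "real ^ ('n::finite) \<Rightarrow> ('n, 'k::comm_ring_1) mpoly set \<Rightarrow> ('n, 'k) mpoly set" where
  "init_form_comps w I = {h. \<forall>t. wt_comp w t h \<in> init_form w ` I}"

lemma zero_in_init_forms: "is_ideal I \<Longrightarrow> 0 \<in> init_form w ` I"
  by (rule rev_image_eqI[OF is_ideal_zero]) simp_all

lemma init_form_comps_add:
  fixes I :: "('n::finite, 'k::field) mpoly set"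
  assumes I: "is_ideal I" and h: "h1 \<in> init_form_comps w I" "h2 \<in> init_form_comps w I"
  shows "h1 + h2 \<in> init_form_comps w I"
  unfolding init_form_comps_def
proof (intro CollectI allI)
  fix t
  obtain f1 f2 where f: "f1 \<in> I" "f2 \<in> I"
    and comps: "wt_comp w t h1 = init_form w f1" "wt_comp w t h2 = init_form w f2"
    using h unfolding init_form_comps_def by blast
  have "init_form w f1 + init_form w f2 \<in> init_form w ` I"
  proof (cases "f1 = 0 \<or> f2 = 0")
    case True
    then show ?thesis using f by auto
  next
    case False
    then have "max_wt w f1 = max_wt w f2"
      using max_wt_eq_of_wt_comp[OF comps(1)] max_wt_eq_of_wt_comp[OF comps(2)] by simp
    then show ?thesis
      using init_form_add_eq_max_wt[of f1 f2 w] False zero_in_init_forms[OF I] is_ideal_add[OF I f] by auto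
  qed
  then show "wt_comp w t (h1 + h2) \<in> init_form w ` I"
    using comps by (simp add: wt_comp_add)
qed

lemma init_form_comps_single_mult:
  fixes I :: "('n::finite, 'k::field) mpoly set"
  assumes I: "is_ideal I" and h: "h \<in> init_form_comps w I"
  shows "Poly_Mapping.single m c * h \<in> init_form_comps w I"
proof (cases "c = 0")
  case True
  then show ?thesis unfolding init_form_comps_def wt_comp_def using zero_in_init_forms[OF I] by simp
next
  case False
  have "wt_comp w t (Poly_Mapping.single m c * h) \<in> init_form w ` I" for t
  proof -
    obtain f where "f \<in> I" "wt_comp w (t - wt w m) h = init_form w f"
      using h unfolding init_form_comps_def by blast
    then show ?thesis
      using is_ideal_mult[OF I] by (simp add: wt_comp_single_mult init_form_single_mult[OF False, symmetric])
  qed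
  then show ?thesis unfolding init_form_comps_def by blast
qed

lemma init_ideal_subset_init_form_comps:
  fixes I :: "('n::finite, 'k::field) mpoly set"
  assumes I: "is_ideal I"
  shows "init_ideal w I \<subseteq> init_form_comps w I"
  unfolding init_ideal_def
proof (rule ideal_gen_least)
  show "is_ideal (init_form_comps w I)"
    using init_form_comps_add[OF I] init_form_comps_single_mult[OF I] zero_in_init_forms[OF I]
    by (intro is_ideal_if_closed_single_mult) (simp_all add: init_form_comps_def wt_comp_def)
  show "init_form w ` I \<subseteq> init_form_comps w I"
    unfolding init_form_comps_def using zero_in_init_forms[OF I] by (auto simp: wt_comp_init_form)
qed

lemma lead_mon_init_ideal:
  fixes I :: "('n::finite, 'k::field) mpoly set"
  assumes I: "homogeneous_ideal I" and \<sigma>: "lin_ord \<sigma>"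
    and h: "h \<in> init_ideal w I" "homog e h" "h \<noteq> 0"
  shows "\<exists>f\<in>I. homog e f \<and> f \<noteq> 0 \<and> lead_mon (refine (wt w) \<sigma>) f = lead_mon \<sigma> h"
proof -
  define a where "a = lead_mon \<sigma> h"
  have a_h: "a \<in> Poly_Mapping.keys h"
    unfolding a_def by (rule lead_mon_in_keys[OF \<sigma> h(3)])
  obtain f0 where f0: "f0 \<in> I" "wt_comp w (wt w a) h = init_form w f0"
    using init_ideal_subset_init_form_comps[OF homogeneous_ideal_is_ideal[OF I]] h(1)
    unfolding init_form_comps_def by blast
  have max_f0: "max_wt_mons w (Poly_Mapping.keys f0) = {m \<in> Poly_Mapping.keys h. wt w m = wt w a}"
    unfolding keys_init_form[symmetric] f0(2)[symmetric] by (rule keys_wt_comp)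
  then have a_f0: "a \<in> max_wt_mons w (Poly_Mapping.keys f0)"
    using a_h by simp
  define f where "f = hcomp e f0"
  have a_f: "a \<in> Poly_Mapping.keys f"
    using a_h a_f0 h(2) unfolding f_def keys_hcomp homog_def max_wt_mons_def by blast
  have "lead_mon (refine (wt w) \<sigma>) f = a"
  proof (rule lead_mon_eqI[OF lin_ord_refine[OF \<sigma>] a_f])
    fix m assume "m \<in> Poly_Mapping.keys f"
    then have m: "m \<in> Poly_Mapping.keys f0" by (simp add: f_def keys_hcomp)
    then have "wt w m \<le> wt w a" using a_f0 by (simp add: max_wt_mons_def)
    moreover have "\<sigma> m a" if "wt w m = wt w a"
    proof -
      have "m \<in> max_wt_mons w (Poly_Mapping.keys f0)"
        using that m a_f0 unfolding max_wt_mons_def by auto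
      then have "m \<in> Poly_Mapping.keys h" using max_f0 by simp
      then show ?thesis unfolding a_def by (rule lead_mon_ge[OF \<sigma>])
    qed
    ultimately show "refine (wt w) \<sigma> m a" unfolding refine_def by auto
  qed
  moreover have "f \<in> I" "homog e f"
    using homogeneous_ideal_hcomp[OF I f0(1)] homog_hcomp unfolding f_def by auto
  ultimately show ?thesis using a_f unfolding a_def by auto
qed

definition lead_mons :: "('n monom \<Rightarrow> 'n monom \<Rightarrow> bool) \<Rightarrow> ('n::finite, 'k::zero) mpoly set \<Rightarrow> nat \<Rightarrow> 'n monom set" where
  "lead_mons le I e = {lead_mon le f | f. f \<in> I \<and> homog e f \<and> f \<noteq> 0}"

lemma lead_monsI: "f \<in> I \<Longrightarrow> homog e f \<Longrightarrow> f \<noteq> 0 \<Longrightarrow> lead_mon le f \<in> lead_mons le I e"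
  unfolding lead_mons_def by blast

lemma lead_monsE:
  assumes "a \<in> lead_mons le I e"
  obtains f where "f \<in> I" "homog e f" "f \<noteq> 0" "lead_mon le f = a"
  using assms unfolding lead_mons_def by blast

lemma lead_mons_subset_of_init_ideal_eq:
  fixes I :: "('n::finite, 'k::field) mpoly set"
  assumes I: "homogeneous_ideal I" and \<tau>: "lin_ord \<tau>" and eq: "init_ideal w1 I = init_ideal w2 I"
  shows "lead_mons (refine (wt w1) \<tau>) I e \<subseteq> lead_mons (refine (wt w2) \<tau>) I e"
proof
  fix a assume "a \<in> lead_mons (refine (wt w1) \<tau>) I e"
  then obtain f where f: "f \<in> I" "homog e f" "f \<noteq> 0" "lead_mon (refine (wt w1) \<tau>) f = a"
    by (rule lead_monsE)
  have "init_form w1 f \<in> init_ideal w2 I" "homog e (init_form w1 f)" "init_form w1 f \<noteq> 0"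
    using init_form_in_init_ideal[OF f(1)] eq homog_subset[OF f(2) keys_init_form_subset] f(3)
    by auto
  then obtain f' where "f' \<in> I" "homog e f'" "f' \<noteq> 0"
    "lead_mon (refine (wt w2) \<tau>) f' = lead_mon \<tau> (init_form w1 f)"
    using lead_mon_init_ideal[OF I \<tau>] by blast
  then show "a \<in> lead_mons (refine (wt w2) \<tau>) I e"
    using lead_monsI[of f' I e "refine (wt w2) \<tau>"] lead_init_form[OF \<tau> f(3)] f(4) by simp
qed

lemma lead_mons_eq_of_init_ideal_eq:
  fixes I :: "('n::finite, 'k::field) mpoly set"
  assumes "homogeneous_ideal I" "lin_ord \<tau>" "init_ideal w1 I = init_ideal w2 I"
  shows "lead_mons (refine (wt w1) \<tau>) I e = lead_mons (refine (wt w2) \<tau>) I e"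
  using lead_mons_subset_of_init_ideal_eq[OF assms] lead_mons_subset_of_init_ideal_eq[OF assms(1,2) assms(3)[symmetric]]
  by (rule antisym)

section \<open>Reduction to low degrees\<close>

definition strictly_below :: "(('n::finite) monom \<Rightarrow> 'n monom \<Rightarrow> bool) \<Rightarrow> nat \<Rightarrow> 'n monom \<Rightarrow> 'n monom set" where
  "strictly_below le e a = {m. monom_deg m = e \<and> le m a \<and> m \<noteq> a}"

lemma card_strictly_below_less:
  assumes le: "lin_ord le" and "monom_deg b = e" "le b a" "b \<noteq> a"
  shows "card (strictly_below le e b) < card (strictly_below le e (a :: ('n::finite) monom))"
proof (rule psubset_card_mono)
  show "finite (strictly_below le e a)"
    unfolding strictly_below_def by (rule finite_subset[OF _ finite_monom_deg_eq[of e]]) blast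
  have "strictly_below le e b \<subseteq> strictly_below le e a"
    unfolding strictly_below_def using assms lin_ord_trans[OF le] lin_ord_antisym[OF le] by blast
  moreover have "b \<in> strictly_below le e a - strictly_below le e b"
    unfolding strictly_below_def using assms by blast
  ultimately show "strictly_below le e b \<subset> strictly_below le e a" by blast
qed

lemma init_form_cancel_at_lead:
  fixes f H :: "('n::finite, 'k::field) mpoly"
  assumes \<rho>: "lin_ord \<rho>" and H: "lead_mon (refine (wt v) \<rho>) H = lead_mon (refine (wt v) \<rho>) f"
  defines "a \<equiv> lead_mon (refine (wt v) \<rho>) f"
  shows "init_form v f = Poly_Mapping.single 0 (Poly_Mapping.lookup f a / Poly_Mapping.lookup H a) * init_form v H
           + wt_comp v (wt v a) (cancel_at a f H)"
    and "wt_comp v (wt v a) (cancel_at a f H) = 0 \<or> wt_comp v (wt v a) (cancel_at a f H) = init_form v (cancel_at a f H)"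
proof -
  have O: "lin_ord (refine (wt v) \<rho>)" using \<rho> by (rule lin_ord_refine)
  have "init_form v f = wt_comp v (wt v a) f"
    unfolding a_def by (rule init_form_eq_wt_comp_lead_mon[OF \<rho>])
  moreover have "init_form v H = wt_comp v (wt v a) H"
    unfolding a_def H[symmetric] by (rule init_form_eq_wt_comp_lead_mon[OF \<rho>])
  ultimately show "init_form v f = Poly_Mapping.single 0 (Poly_Mapping.lookup f a / Poly_Mapping.lookup H a) * init_form v H
           + wt_comp v (wt v a) (cancel_at a f H)"
    unfolding cancel_at_def by (simp add: wt_comp_diff wt_comp_single_mult)
  have below: "wt v m \<le> wt v a" if "m \<in> Poly_Mapping.keys (cancel_at a f H)" for m
  proof -
    have "m \<in> Poly_Mapping.keys f \<or> m \<in> Poly_Mapping.keys H"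
      using that keys_cancel_at_subset[of a f H] by blast
    then have "refine (wt v) \<rho> m a"
      using lead_mon_ge[OF O, of m f] lead_mon_ge[OF O, of m H] H unfolding a_def by auto
    then show ?thesis by (rule refine_imp_le)
  qed
  show "wt_comp v (wt v a) (cancel_at a f H) = 0 \<or> wt_comp v (wt v a) (cancel_at a f H) = init_form v (cancel_at a f H)"
  proof (cases "wt_comp v (wt v a) (cancel_at a f H) = 0")
    case False
    then obtain m0 where "m0 \<in> Poly_Mapping.keys (wt_comp v (wt v a) (cancel_at a f H))"
      by (metis keys_eq_empty ex_in_conv)
    then have "init_form v (cancel_at a f H) = wt_comp v (wt v a) (cancel_at a f H)"
      using below by (intro init_form_eq_wt_comp[of _ _ _ m0]) (auto simp: keys_wt_comp)
    then show ?thesis by simp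
  qed simp
qed

lemma lead_mon_cancel_at_lead:
  fixes f H :: "('n::finite, 'k::field) mpoly"
  assumes \<rho>: "lin_ord \<rho>" and H: "H \<noteq> 0" "lead_mon (refine (wt v) \<rho>) H = lead_mon (refine (wt v) \<rho>) f"
    and F: "cancel_at (lead_mon (refine (wt v) \<rho>) f) f H \<noteq> 0"
  defines "a \<equiv> lead_mon (refine (wt v) \<rho>) f"
  shows "refine (wt v) \<rho> (lead_mon (refine (wt v) \<rho>) (cancel_at a f H)) a"
    and "lead_mon (refine (wt v) \<rho>) (cancel_at a f H) \<noteq> a"
proof -
  let ?O = "refine (wt v) \<rho>"
  have O: "lin_ord ?O" using \<rho> by (rule lin_ord_refine)
  have b: "lead_mon ?O (cancel_at a f H) \<in> Poly_Mapping.keys (cancel_at a f H)"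
    using lead_mon_in_keys[OF O F[folded a_def]] .
  then have "lead_mon ?O (cancel_at a f H) \<in> Poly_Mapping.keys f \<or> lead_mon ?O (cancel_at a f H) \<in> Poly_Mapping.keys H"
    using keys_cancel_at_subset[of a f H] by blast
  then show "?O (lead_mon ?O (cancel_at a f H)) a"
    using lead_mon_ge[OF O, of _ f] lead_mon_ge[OF O, of _ H] H(2) unfolding a_def by auto
  have "a \<in> Poly_Mapping.keys H" using lead_mon_in_keys[OF O H(1)] H(2) unfolding a_def by simp
  then show "lead_mon ?O (cancel_at a f H) \<noteq> a"
    using b lookup_cancel_at_self[of a H f] by (auto simp: in_keys_iff)
qed

text \<open>Induction on the number of degree-\<open>e\<close> monomials below the leading monomial: cancelling
  the leading term of \<open>f\<close> against \<open>H\<close> writes \<open>init_form v f\<close> as a multiple of \<open>init_form v H\<close>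
  plus zero or the initial form of a polynomial with a smaller leading monomial.\<close>

lemma init_form_in_ideal_by_lead_reduction:
  fixes I :: "('n::finite, 'k::field) mpoly set"
  assumes I: "is_ideal I" and \<rho>: "lin_ord \<rho>" and K: "is_ideal K"
    and step: "\<And>F. F \<in> I \<Longrightarrow> homog e F \<Longrightarrow> F \<noteq> 0 \<Longrightarrow> \<exists>H\<in>I. homog e H \<and> H \<noteq> 0 \<and>
        lead_mon (refine (wt v) \<rho>) H = lead_mon (refine (wt v) \<rho>) F \<and> init_form v H \<in> K"
    and "f \<in> I" "homog e f"
  shows "init_form v f \<in> K"
  using assms(5,6)
proof (induction f rule: measure_induct_rule[where f = "\<lambda>f. card (strictly_below (refine (wt v) \<rho>) e (lead_mon (refine (wt v) \<rho>) f))"])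
  case (less f)
  let ?O = "refine (wt v) \<rho>"
  have O: "lin_ord ?O" using \<rho> by (rule lin_ord_refine)
  show ?case
  proof (cases "f = 0")
    case True
    then show ?thesis using is_ideal_zero[OF K] by simp
  next
    case False
    define a where "a = lead_mon ?O f"
    obtain H where H: "H \<in> I" "homog e H" "H \<noteq> 0" "lead_mon ?O H = a" "init_form v H \<in> K"
      using step[OF less.prems False] unfolding a_def by blast
    define F where "F = cancel_at a f H"
    have "wt_comp v (wt v a) F \<in> K"
    proof (cases "wt_comp v (wt v a) F = 0")
      case True
      then show ?thesis using is_ideal_zero[OF K] by simp
    next
      case False
      then have F: "wt_comp v (wt v a) F = init_form v F" "F \<noteq> 0"
        using init_form_cancel_at_lead(2)[OF \<rho> H(4)[unfolded a_def]] unfolding F_def a_def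
        by (auto simp: wt_comp_def)
      have "F \<in> I" "homog e F"
        unfolding F_def using cancel_at_in_ideal[OF I less.prems(1) H(1)] homog_cancel_at[OF less.prems(2) H(2)] .
      moreover have "card (strictly_below ?O e (lead_mon ?O F)) < card (strictly_below ?O e a)"
      proof (rule card_strictly_below_less[OF O])
        show "monom_deg (lead_mon ?O F) = e"
          using lead_mon_in_keys[OF O F(2)] \<open>homog e F\<close> unfolding homog_def by blast
        show "?O (lead_mon ?O F) a" "lead_mon ?O F \<noteq> a"
          using lead_mon_cancel_at_lead[OF \<rho> H(3) H(4)[unfolded a_def]] F(2) unfolding F_def a_def by simp_all
      qed
      ultimately show ?thesis using less.IH F(1) unfolding a_def by simp
    qed
    then show ?thesis
      using init_form_cancel_at_lead(1)[OF \<rho> H(4)[unfolded a_def]] is_ideal_add[OF K is_ideal_mult[OF K H(5)]]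
      unfolding F_def a_def by simp
  qed
qed

lemma lead_mon_multiple_of_low_degree_lead:
  fixes I :: "('n::finite, 'k::comm_ring_1) mpoly set"
  assumes gen: "generated_in_degrees_le (init_ideal_to T I) d" and f: "f \<in> I" "f \<noteq> 0"
  shows "\<exists>f'\<in>I. f' \<noteq> 0 \<and> monom_deg (lead_mon T f') \<le> d \<and> (\<exists>c. lead_mon T f = c + lead_mon T f')"
proof -
  define M where "M = init_ideal_to T I"
  have M_gen: "M = ideal_gen {q \<in> M. deg_le q d}"
    using gen unfolding M_def generated_in_degrees_le_def .
  have "Poly_Mapping.single (lead_mon T f) 1 \<in> M"
    unfolding M_def init_ideal_to_def using f by (intro subsetD[OF ideal_gen_superset]) blast
  then have "Poly_Mapping.single (lead_mon T f) (1::'k) \<in> ideal_gen {q \<in> M. deg_le q d}"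
    using M_gen by blast
  then obtain q b c where q: "q \<in> M" "deg_le q d" "b \<in> Poly_Mapping.keys q" "lead_mon T f = c + b"
    by (rule keys_ideal_gen_multiple) auto
  obtain s a' c' where s: "s \<in> {Poly_Mapping.single (lead_mon T f') (1::'k) | f'. f' \<in> I \<and> f' \<noteq> 0}"
    "a' \<in> Poly_Mapping.keys s" "b = c' + a'"
    using keys_ideal_gen_multiple[OF q(1)[unfolded M_def init_ideal_to_def] q(3)] .
  from s(1) obtain f' where f': "f' \<in> I" "f' \<noteq> 0" "s = Poly_Mapping.single (lead_mon T f') 1"
    by blast
  have a': "a' = lead_mon T f'"
    using s(2) f'(3) by simp
  have "monom_deg b \<le> d"
    using q(2,3) unfolding deg_le_def mon_def by blast
  then have "monom_deg (lead_mon T f') \<le> d"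
    unfolding s(3) a' monom_deg_add by simp
  moreover have "lead_mon T f = (c + c') + lead_mon T f'"
    using q(4) s(3) a' by (simp add: add.assoc)
  ultimately show ?thesis using f'(1,2) by blast
qed

lemma lead_mon_hcomp_lead:
  assumes "lin_ord T" "f \<noteq> 0"
  shows "lead_mon T (hcomp (monom_deg (lead_mon T f)) f) = lead_mon T f"
  using assms lead_mon_in_keys lead_mon_ge by (intro lead_mon_eqI) (auto simp: keys_hcomp)

lemma lead_mon_single_mult:
  assumes T: "term_order T" and "f \<noteq> 0"
  shows "lead_mon T (Poly_Mapping.single c (1::'k::idom) * f) = c + lead_mon T f"
proof -
  have mono: "T a b \<Longrightarrow> T (a + c) (b + c)" for a b
    using T unfolding term_order_def by blast
  have "T (m + c) (lead_mon T f + c)" if "m \<in> Poly_Mapping.keys f" for m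
    using mono[OF lead_mon_ge[OF term_order_lin_ord[OF T] that]] .
  then show ?thesis
    using lead_mon_in_keys[OF term_order_lin_ord[OF T] assms(2)]
    by (intro lead_mon_eqI[OF term_order_lin_ord[OF T]]) (auto simp: keys_single_mult add.commute)
qed

lemma ex_homog_low_degree_lead_divisor:
  fixes I :: "('n::finite, 'k::field) mpoly set"
  assumes I: "homogeneous_ideal I" and T: "lin_ord T" and gen: "generated_in_degrees_le (init_ideal_to T I) d"
    and F: "F \<in> I" "F \<noteq> 0"
  shows "\<exists>g\<in>I. g \<noteq> 0 \<and> homog (monom_deg (lead_mon T g)) g \<and> monom_deg (lead_mon T g) \<le> d \<and>
           (\<exists>c. lead_mon T F = c + lead_mon T g)"
proof -
  obtain f' c where f': "f' \<in> I" "f' \<noteq> 0" "monom_deg (lead_mon T f') \<le> d"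
    "lead_mon T F = c + lead_mon T f'"
    using lead_mon_multiple_of_low_degree_lead[OF gen F] by blast
  define g where "g = hcomp (monom_deg (lead_mon T f')) f'"
  have g: "g \<in> I" "homog (monom_deg (lead_mon T f')) g" "lead_mon T g = lead_mon T f'"
    unfolding g_def using homogeneous_ideal_hcomp[OF I f'(1)] homog_hcomp lead_mon_hcomp_lead[OF T f'(2)]
    by auto
  have "lead_mon T f' \<in> Poly_Mapping.keys g"
    using g(3) lead_mon_in_keys[OF T f'(2)] unfolding g_def keys_hcomp by simp
  then have "g \<noteq> 0" by auto
  then show ?thesis using g f'(3,4) by auto
qed

lemma init_form_homog_in_low_degree_ideal:
  fixes I :: "('n::finite, 'k::field) mpoly set"
  assumes I: "homogeneous_ideal I" and gen: "\<forall>J\<in>monomial_initial_ideals I. generated_in_degrees_le J d"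
    and f: "f \<in> I" "homog e f"
  shows "init_form v f \<in> ideal_gen {init_form v g | g. g \<in> I \<and> (\<exists>e'\<le>d. homog e' g)}" (is "_ \<in> ?K")
proof -
  obtain \<tau> :: "'n monom \<Rightarrow> 'n monom \<Rightarrow> bool" where \<tau>: "term_order \<tau>"
    using ex_term_order by blast
  define T where "T = refine (shifted_wt v) \<tau>"
  have T: "term_order T" "lin_ord T"
    unfolding T_def using term_order_refine_shifted_wt[OF \<tau>] term_order_lin_ord by blast+
  have lead_T: "lead_mon T g = lead_mon (refine (wt v) \<tau>) g" if "homog e' g" for e' g
    unfolding T_def using lead_mon_refine_shifted_wt[OF term_order_lin_ord[OF \<tau>] that] .
  have gen_T: "generated_in_degrees_le (init_ideal_to T I) d"
    using gen T(1) unfolding monomial_initial_ideals_def by blast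
  show ?thesis
  proof (rule init_form_in_ideal_by_lead_reduction[OF homogeneous_ideal_is_ideal[OF I]
        term_order_lin_ord[OF \<tau>] is_ideal_ideal_gen _ f])
    fix F assume F: "F \<in> I" "homog e F" "F \<noteq> 0"
    obtain g c where g: "g \<in> I" "g \<noteq> 0" "homog (monom_deg (lead_mon T g)) g"
      "monom_deg (lead_mon T g) \<le> d" "lead_mon T F = c + lead_mon T g"
      using ex_homog_low_degree_lead_divisor[OF I T(2) gen_T F(1,3)] by blast
    define H where "H = Poly_Mapping.single c 1 * g"
    have "H \<in> I"
      unfolding H_def using is_ideal_mult[OF homogeneous_ideal_is_ideal[OF I] g(1)] .
    have "c + lead_mon T g \<in> Poly_Mapping.keys H"
      unfolding H_def keys_single_mult[OF one_neq_zero] using lead_mon_in_keys[OF T(2) g(2)] by blast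
    then have "H \<noteq> 0" by auto
    have "monom_deg (lead_mon T F) = e"
      using lead_mon_in_keys[OF T(2) F(3)] F(2) unfolding homog_def by blast
    then have H: "homog e H"
      using g(3,5) unfolding H_def homog_def by (auto simp: keys_single_mult monom_deg_add)
    have "lead_mon T H = lead_mon T F"
      unfolding H_def using lead_mon_single_mult[OF T(1) g(2)] g(5) by simp
    then have lead: "lead_mon (refine (wt v) \<tau>) H = lead_mon (refine (wt v) \<tau>) F"
      using lead_T[OF H] lead_T[OF F(2)] by simp
    have "init_form v g \<in> {init_form v g | g. g \<in> I \<and> (\<exists>e'\<le>d. homog e' g)}"
      using g(1,3,4) by blast
    then have "init_form v H \<in> ?K"
      unfolding H_def init_form_single_mult[OF one_neq_zero]
      by (intro is_ideal_mult[OF is_ideal_ideal_gen] subsetD[OF ideal_gen_superset])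
    then show "\<exists>H\<in>I. homog e H \<and> H \<noteq> 0 \<and>
        lead_mon (refine (wt v) \<tau>) H = lead_mon (refine (wt v) \<tau>) F \<and> init_form v H \<in> ?K"
      using \<open>H \<in> I\<close> H \<open>H \<noteq> 0\<close> lead by blast
  qed
qed

lemma init_form_in_ideal_of_homog:
  assumes I: "homogeneous_ideal I" and K: "is_ideal K"
    and homog: "\<And>g e. g \<in> I \<Longrightarrow> homog e g \<Longrightarrow> init_form v g \<in> K" and f: "f \<in> I"
  shows "init_form v f \<in> K"
proof -
  have "init_form v f = (\<Sum>e\<in>monom_deg ` Poly_Mapping.keys (init_form v f). hcomp e (init_form v f))"
    by (rule poly_mapping_sum_hcomp)
  also have "\<dots> \<in> K"
  proof (rule is_ideal_sum[OF K])
    fix e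
    show "hcomp e (init_form v f) \<in> K"
    proof (cases "hcomp e (init_form v f) = 0")
      case True
      then show ?thesis using is_ideal_zero[OF K] by simp
    next
      case False
      then show ?thesis
        using hcomp_init_form[OF False] homog[OF homogeneous_ideal_hcomp[OF I f] homog_hcomp] by simp
    qed
  qed simp
  finally show ?thesis .
qed

lemma init_ideal_subset_if_low_degree:
  fixes I :: "('n::finite, 'k::field) mpoly set"
  assumes I: "homogeneous_ideal I" and gen: "\<forall>J\<in>monomial_initial_ideals I. generated_in_degrees_le J d"
    and K: "is_ideal K" and low: "\<And>f e. f \<in> I \<Longrightarrow> homog e f \<Longrightarrow> e \<le> d \<Longrightarrow> init_form v f \<in> K"
  shows "init_ideal v I \<subseteq> K"
proof -
  have "ideal_gen {init_form v g | g. g \<in> I \<and> (\<exists>e\<le>d. homog e g)} \<subseteq> K"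
    using low by (intro ideal_gen_least[OF K]) blast
  then have "init_form v f \<in> K" if "f \<in> I" for f
    using init_form_homog_in_low_degree_ideal[OF I gen] by (intro init_form_in_ideal_of_homog[OF I K _ that]) blast
  then show ?thesis unfolding init_ideal_def by (intro ideal_gen_least[OF K]) blast
qed

section \<open>Reduced elements\<close>

lemma keys_cancel_at_reduced:
  assumes le: "lin_ord le" and ab: "le b a" "b \<noteq> a"
    and r: "a \<in> Poly_Mapping.keys r" "b \<in> Poly_Mapping.keys r" "\<forall>m\<in>Poly_Mapping.keys r. le m a"
    and rb: "b \<in> Poly_Mapping.keys rb" "\<forall>m\<in>Poly_Mapping.keys rb. le m b" "Poly_Mapping.keys rb \<inter> L \<subseteq> {b}"
    and "b \<in> L"
  shows "a \<in> Poly_Mapping.keys (cancel_at b r rb)" "\<forall>m\<in>Poly_Mapping.keys (cancel_at b r rb). le m a"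
    and "Poly_Mapping.keys (cancel_at b r rb) \<inter> L \<subset> Poly_Mapping.keys r \<inter> L"
proof -
  have "a \<notin> Poly_Mapping.keys rb"
    using rb(2) ab lin_ord_antisym[OF le] by blast
  then show "a \<in> Poly_Mapping.keys (cancel_at b r rb)"
    using r(1) lookup_cancel_at_other[of a rb b r] by (simp add: in_keys_iff)
  show "\<forall>m\<in>Poly_Mapping.keys (cancel_at b r rb). le m a"
  proof
    fix m assume "m \<in> Poly_Mapping.keys (cancel_at b r rb)"
    then have "m \<in> Poly_Mapping.keys r \<or> m \<in> Poly_Mapping.keys rb"
      using keys_cancel_at_subset[of b r rb] by blast
    then show "le m a"
      using r(3) rb(2) lin_ord_trans[OF le _ ab(1), of m] by blast
  qed
  have b: "b \<notin> Poly_Mapping.keys (cancel_at b r rb)"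
    using lookup_cancel_at_self[OF rb(1)] by (simp add: in_keys_iff)
  have "m \<in> Poly_Mapping.keys r" if "m \<in> Poly_Mapping.keys (cancel_at b r rb) \<inter> L" for m
  proof -
    have "m \<notin> Poly_Mapping.keys rb" using that b rb(3) by blast
    then show ?thesis
      using that lookup_cancel_at_other[of m rb b r] by (simp add: in_keys_iff)
  qed
  then have "Poly_Mapping.keys (cancel_at b r rb) \<inter> L \<subseteq> Poly_Mapping.keys r \<inter> L"
    by blast
  then show "Poly_Mapping.keys (cancel_at b r rb) \<inter> L \<subset> Poly_Mapping.keys r \<inter> L"
    using b r(2) \<open>b \<in> L\<close> by blast
qed

lemma ex_reduced:
  fixes I :: "('n::finite, 'k::field) mpoly set"
  assumes I: "is_ideal I" and le: "lin_ord le" and "a \<in> lead_mons le I e"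
  shows "\<exists>r\<in>I. homog e r \<and> a \<in> Poly_Mapping.keys r \<and> (\<forall>m\<in>Poly_Mapping.keys r. le m a) \<and>
           Poly_Mapping.keys r \<inter> lead_mons le I e \<subseteq> {a}"
  using assms(3)
proof (induction a rule: measure_induct_rule[where f = "\<lambda>a. card (strictly_below le e a)"])
  case (less a)
  define L where "L = lead_mons le I e"
  define R where "R = {r \<in> I. homog e r \<and> a \<in> Poly_Mapping.keys r \<and> (\<forall>m\<in>Poly_Mapping.keys r. le m a)}"
  obtain f where f: "f \<in> I" "homog e f" "f \<noteq> 0" "lead_mon le f = a"
    using less.prems by (rule lead_monsE)
  then have "f \<in> R"
    unfolding R_def using lead_mon_in_keys[OF le f(3)] lead_mon_ge[OF le, of _ f] by blast
  then obtain r where r: "r \<in> R"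
    and r_min: "\<And>r'. r' \<in> R \<Longrightarrow> card (Poly_Mapping.keys r \<inter> L) \<le> card (Poly_Mapping.keys r' \<inter> L)"
    using ex_has_least_nat[of "\<lambda>r. r \<in> R" f "\<lambda>r. card (Poly_Mapping.keys r \<inter> L)"] by blast
  have r_I: "r \<in> I" "homog e r" and a_r: "a \<in> Poly_Mapping.keys r"
    and r_le: "\<And>m. m \<in> Poly_Mapping.keys r \<Longrightarrow> le m a"
    using r unfolding R_def by auto
  have "Poly_Mapping.keys r \<inter> L \<subseteq> {a}"
  proof (rule ccontr)
    assume "\<not> Poly_Mapping.keys r \<inter> L \<subseteq> {a}"
    then obtain b where b: "b \<in> Poly_Mapping.keys r" "b \<in> L" "b \<noteq> a" by blast
    have "le b a" "monom_deg b = e"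
      using r_le[OF b(1)] b(1) r_I(2) unfolding homog_def by auto
    then have "card (strictly_below le e b) < card (strictly_below le e a)"
      using card_strictly_below_less[OF le _ _ b(3)] by blast
    then obtain rb where rb: "rb \<in> I" "homog e rb" "b \<in> Poly_Mapping.keys rb"
      "\<forall>m\<in>Poly_Mapping.keys rb. le m b" "Poly_Mapping.keys rb \<inter> L \<subseteq> {b}"
      using less.IH b(2) unfolding L_def by blast
    define r' where "r' = cancel_at b r rb"
    have r': "a \<in> Poly_Mapping.keys r'" "\<forall>m\<in>Poly_Mapping.keys r'. le m a"
      "Poly_Mapping.keys r' \<inter> L \<subset> Poly_Mapping.keys r \<inter> L"
      using keys_cancel_at_reduced[OF le \<open>le b a\<close> b(3) a_r b(1) ballI[OF r_le] rb(3-5) b(2)]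
      unfolding r'_def by blast+
    have "r' \<in> I" "homog e r'"
      unfolding r'_def using cancel_at_in_ideal[OF I r_I(1) rb(1)] homog_cancel_at[OF r_I(2) rb(2)] .
    then have "r' \<in> R" unfolding R_def using r'(1,2) by blast
    from r'(3) have "card (Poly_Mapping.keys r' \<inter> L) < card (Poly_Mapping.keys r \<inter> L)"
      by (rule psubset_card_mono[rotated]) simp
    then show False using r_min[OF \<open>r' \<in> R\<close>] by simp
  qed
  then show ?case using r_I a_r r_le unfolding L_def by blast
qed

text \<open>Were the two initial forms different, their difference would lie in \<open>in\<^sub>w\<^sub>1(I)\<close> and
  its leading monomial would be a leading monomial of \<open>I\<close> in the support of \<open>r\<close> other than \<open>a\<close>,
  because both weights pick the coefficient of \<open>a\<close>.\<close>

lemma init_form_eq_of_reduced: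
  fixes I :: "('n::finite, 'k::field) mpoly set"
  assumes I: "homogeneous_ideal I" and \<tau>: "lin_ord \<tau>" and eq: "init_ideal w1 I = init_ideal w2 I"
    and r: "r \<in> I" "homog e r" "a \<in> Poly_Mapping.keys r"
    and reduced: "Poly_Mapping.keys r \<inter> lead_mons (refine (wt w1) \<tau>) I e \<subseteq> {a}"
  shows "init_form w1 r = init_form w2 r"
proof (rule ccontr)
  assume ne: "init_form w1 r \<noteq> init_form w2 r"
  have r0: "r \<noteq> 0" using r(3) by auto
  have lead: "lead_mon (refine (wt w) \<tau>) r = a" if "w = w1 \<or> w = w2" for w
  proof -
    have "lead_mon (refine (wt w) \<tau>) r \<in> lead_mons (refine (wt w) \<tau>) I e"
      using r(1,2) r0 by (rule lead_monsI)
    then have "lead_mon (refine (wt w) \<tau>) r \<in> lead_mons (refine (wt w1) \<tau>) I e"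
      using that lead_mons_eq_of_init_ideal_eq[OF I \<tau> eq] by auto
    then show ?thesis
      using reduced lead_mon_in_keys[OF lin_ord_refine[OF \<tau>] r0] by blast
  qed
  have a: "a \<in> max_wt_mons w1 (Poly_Mapping.keys r)" "a \<in> max_wt_mons w2 (Poly_Mapping.keys r)"
    using lead_mon_in_max_wt_mons[OF \<tau> r0, of w1] lead_mon_in_max_wt_mons[OF \<tau> r0, of w2] lead by auto
  define D where "D = init_form w1 r - init_form w2 r"
  have "D \<in> init_ideal w1 I"
    unfolding D_def using is_ideal_diff_mult[OF is_ideal_init_ideal, of _ w1 I _ 1] eq
      init_form_in_init_ideal[OF r(1), of w1] init_form_in_init_ideal[OF r(1), of w2] by simp
  moreover have "homog e D"
    unfolding D_def using homog_diff homog_subset[OF r(2) keys_init_form_subset] by blast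
  moreover have "D \<noteq> 0" using ne unfolding D_def by simp
  ultimately obtain f where "f \<in> I" "homog e f" "f \<noteq> 0" "lead_mon (refine (wt w1) \<tau>) f = lead_mon \<tau> D"
    using lead_mon_init_ideal[OF I \<tau>] by blast
  then have "lead_mon \<tau> D \<in> lead_mons (refine (wt w1) \<tau>) I e"
    using lead_monsI[of f I e "refine (wt w1) \<tau>"] by simp
  moreover have "lead_mon \<tau> D \<in> Poly_Mapping.keys r - {a}"
  proof -
    have "Poly_Mapping.keys D \<subseteq> Poly_Mapping.keys r - {a}"
      using keys_diff[of "init_form w1 r" "init_form w2 r"] keys_init_form_subset a
      unfolding D_def by (auto simp: in_keys_iff lookup_minus init_form_eq_restrict_mons)
    then show ?thesis using lead_mon_in_keys[OF \<tau> \<open>D \<noteq> 0\<close>] by blast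
  qed
  ultimately show False using reduced by blast
qed

section \<open>The permutation action\<close>

lemma lookup_act_mon: "bij g \<Longrightarrow> Poly_Mapping.lookup (act_mon g a) i = Poly_Mapping.lookup a (inv g i)"
  unfolding act_mon_def by (simp add: Poly_Mapping.map_key.rep_eq bij_is_inj bij_imp_bij_inv)

lemma act_mon_inv_cancel:
  assumes "bij g"
  shows "act_mon (inv g) (act_mon g a) = a" "act_mon g (act_mon (inv g) a) = a"
  using assms bij_imp_bij_inv[OF assms]
  by (auto intro!: poly_mapping_eqI simp: lookup_act_mon inv_inv_eq bij_is_inj bij_is_surj surj_f_inv_f)

lemma inj_act_mon: "bij g \<Longrightarrow> inj (act_mon g)"
  by (metis act_mon_inv_cancel(1) injI)

lemma wt_act_mon:
  assumes "bij g"
  shows "wt (act_wt g w) (act_mon (inv g) a) = wt w a"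
proof -
  have "wt (act_wt g w) (act_mon (inv g) a) = (\<Sum>i\<in>UNIV. w $ g i * real (Poly_Mapping.lookup a (g i)))"
    unfolding wt_def act_wt_def using assms by (simp add: lookup_act_mon bij_imp_bij_inv inv_inv_eq)
  also have "\<dots> = wt w a"
    unfolding wt_def
    using sum.reindex_bij_betw[OF assms, where g = "\<lambda>i. w $ i * real (Poly_Mapping.lookup a i)"] by simp
  finally show ?thesis .
qed

lemma monom_deg_act_mon:
  assumes "bij g"
  shows "monom_deg (act_mon g a) = monom_deg a"
  unfolding monom_deg_def lookup_act_mon[OF assms]
  using sum.reindex_bij_betw[OF bij_imp_bij_inv[OF assms], where g = "Poly_Mapping.lookup a"] by simp

lemma mon_act_poly:
  assumes "bij g"
  shows "mon (act_poly g f) = act_mon g ` Poly_Mapping.keys f"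
proof -
  have "mon (act_poly g f) = act_mon (inv g) -` Poly_Mapping.keys f"
    unfolding mon_def act_poly_def by (rule keys_map_key[OF inj_act_mon[OF bij_imp_bij_inv[OF assms]]])
  also have "\<dots> = act_mon g ` Poly_Mapping.keys f"
  proof (intro set_eqI iffI)
    fix x assume "x \<in> act_mon (inv g) -` Poly_Mapping.keys f"
    then show "x \<in> act_mon g ` Poly_Mapping.keys f"
      using act_mon_inv_cancel(2)[OF assms, of x] by (metis image_eqI vimageE)
  next
    fix x assume "x \<in> act_mon g ` Poly_Mapping.keys f"
    then show "x \<in> act_mon (inv g) -` Poly_Mapping.keys f"
      using act_mon_inv_cancel(1)[OF assms] by auto
  qed
  finally show ?thesis .
qed

lemma perm_group_bij: "perm_group G \<Longrightarrow> g \<in> G \<Longrightarrow> bij g"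
  and perm_group_inv: "perm_group G \<Longrightarrow> g \<in> G \<Longrightarrow> inv g \<in> G"
  unfolding perm_group_def by blast+

lemma ex_homog_act_support:
  fixes I :: "('n::finite, 'k::comm_ring_1) mpoly set"
  assumes G: "perm_group G" "acts_monomially_upto G I d" "g \<in> G"
    and f: "f \<in> I" "homog e f" "e \<le> d"
  shows "\<exists>h\<in>I. Poly_Mapping.keys h = act_mon g ` Poly_Mapping.keys f \<and> homog e h"
proof -
  have g: "bij g" using perm_group_bij[OF G(1,3)] .
  have "deg_le f d" using f(2,3) unfolding deg_le_def homog_def mon_def by auto
  then obtain h where h: "h \<in> I" "mon h = mon (act_poly g f)"
    using G(2,3) f(1) unfolding acts_monomially_upto_def by blast
  then have keys: "Poly_Mapping.keys h = act_mon g ` Poly_Mapping.keys f"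
    using mon_act_poly[OF g] unfolding mon_def by simp
  then have "homog e h"
    using f(2) monom_deg_act_mon[OF g] unfolding homog_def by auto
  then show ?thesis using h(1) keys by blast
qed

lemma act_wt_inv_cancel:
  assumes "bij g"
  shows "act_wt g (act_wt (inv g) w) = w" "act_wt (inv g) (act_wt g w) = w"
  unfolding act_wt_def
  by (simp_all add: vec_eq_iff bij_is_inj[OF assms] surj_f_inv_f[OF bij_is_surj[OF assms]])

lemma refine_act_mon:
  assumes "bij g"
  shows "refine (wt (act_wt g w)) (\<lambda>a b. \<tau> (act_mon g a) (act_mon g b)) (act_mon (inv g) a) (act_mon (inv g) b)
    = refine (wt w) \<tau> a b"
  unfolding refine_def by (simp add: wt_act_mon[OF assms] act_mon_inv_cancel[OF assms])

lemma linear_act_wt: "linear (act_wt g :: real ^ ('n::finite) \<Rightarrow> real ^ 'n)"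
  by (rule linearI) (simp_all add: act_wt_def vec_eq_iff)

section \<open>Symmetry of the Groebner fan\<close>

lemma lead_mon_transport:
  fixes G :: "('n::finite \<Rightarrow> 'n) set" and I :: "('n, 'k::field) mpoly set"
  assumes G: "perm_group G" "acts_monomially_upto G I d" "g \<in> G"
    and I: "homogeneous_ideal I" and eq: "init_ideal w1 I = init_ideal w2 I" and \<tau>: "lin_ord \<tau>"
    and F: "F \<in> I" "homog e F" "F \<noteq> 0" "e \<le> d"
  defines "\<sigma> \<equiv> \<lambda>a b. \<tau> (act_mon g a) (act_mon g b)"
  shows "\<exists>H\<in>I. homog e H \<and> H \<noteq> 0 \<and>
    lead_mon (refine (wt (act_wt g w1)) \<sigma>) H = lead_mon (refine (wt (act_wt g w1)) \<sigma>) F \<and>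
    init_form (act_wt g w1) H = init_form (act_wt g w2) H"
proof -
  let ?O = "refine (wt w1) \<tau>" and ?O' = "refine (wt (act_wt g w1)) \<sigma>"
  have g: "bij g" using G(1,3) by (rule perm_group_bij)
  have O: "lin_ord ?O" "lin_ord ?O'"
    unfolding \<sigma>_def using lin_ord_refine[OF \<tau>] lin_ord_refine[OF lin_ord_inv_image[OF \<tau> inj_act_mon[OF g]]] .
  have O'_O: "?O' (act_mon (inv g) a) (act_mon (inv g) b) = ?O a b" for a b
    unfolding \<sigma>_def by (rule refine_act_mon[OF g])
  have O_O': "?O (act_mon g a) (act_mon g b) = ?O' a b" for a b
    using O'_O[of "act_mon g a" "act_mon g b"] by (simp add: act_mon_inv_cancel[OF g])
  obtain h0 where h0: "h0 \<in> I" "Poly_Mapping.keys h0 = act_mon g ` Poly_Mapping.keys F" "homog e h0"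
    using ex_homog_act_support[OF G F(1,2,4)] by blast
  define a where "a = act_mon g (lead_mon ?O' F)"
  have "h0 \<noteq> 0" using h0(2) F(3) by auto
  moreover have "lead_mon ?O h0 = a"
    unfolding a_def using O(2,1) F(3) h0(2) O_O' by (rule lead_mon_image)
  ultimately have "a \<in> lead_mons ?O I e"
    using lead_monsI[OF h0(1,3)] by metis
  then obtain r where r: "r \<in> I" "homog e r" "a \<in> Poly_Mapping.keys r"
    "\<forall>m\<in>Poly_Mapping.keys r. ?O m a" "Poly_Mapping.keys r \<inter> lead_mons ?O I e \<subseteq> {a}"
    using ex_reduced[OF homogeneous_ideal_is_ideal[OF I] O(1)] by blast
  have r0: "r \<noteq> 0" using r(3) by auto
  have "init_form w1 r = init_form w2 r"
    using init_form_eq_of_reduced[OF I \<tau> eq r(1-3,5)] .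
  obtain h where h: "h \<in> I" "Poly_Mapping.keys h = act_mon (inv g) ` Poly_Mapping.keys r" "homog e h"
    using ex_homog_act_support[OF G(1,2) perm_group_inv[OF G(1,3)] r(1,2) F(4)] by blast
  have "h \<noteq> 0" using h(2) r0 by auto
  moreover have "lead_mon ?O r = a"
    using r(3,4) by (intro lead_mon_eqI[OF O(1)]) auto
  then have "lead_mon ?O' h = lead_mon ?O' F"
    using lead_mon_image[OF O r0 h(2) O'_O] act_mon_inv_cancel(1)[OF g] unfolding a_def by simp
  moreover have "init_form (act_wt g w1) h = init_form (act_wt g w2) h"
    using \<open>init_form w1 r = init_form w2 r\<close> wt_act_mon[OF g]
    by (simp add: init_form_eq_iff h(2) max_wt_mons_image)
  ultimately show ?thesis using h(1,3) by blast
qed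

lemma init_ideal_act_wt_subset:
  fixes G :: "('n::finite \<Rightarrow> 'n) set" and I :: "('n, 'k::field) mpoly set"
  assumes G: "perm_group G" "acts_monomially_upto G I d" "g \<in> G"
    and I: "homogeneous_ideal I" and gen: "\<forall>J\<in>monomial_initial_ideals I. generated_in_degrees_le J d"
    and eq: "init_ideal w1 I = init_ideal w2 I"
  shows "init_ideal (act_wt g w1) I \<subseteq> init_ideal (act_wt g w2) I"
proof (rule init_ideal_subset_if_low_degree[OF I gen is_ideal_init_ideal])
  obtain \<tau> :: "'n monom \<Rightarrow> 'n monom \<Rightarrow> bool" where \<tau>: "lin_ord \<tau>"
    using ex_term_order term_order_lin_ord by blast
  have \<sigma>: "lin_ord (\<lambda>a b. \<tau> (act_mon g a) (act_mon g b))"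
    using \<tau> inj_act_mon[OF perm_group_bij[OF G(1,3)]] by (rule lin_ord_inv_image)
  fix f e assume f: "f \<in> I" "homog e f" "e \<le> d"
  show "init_form (act_wt g w1) f \<in> init_ideal (act_wt g w2) I"
  proof (rule init_form_in_ideal_by_lead_reduction[OF homogeneous_ideal_is_ideal[OF I] \<sigma> is_ideal_init_ideal _ f(1,2)])
    fix F assume "F \<in> I" "homog e F" "F \<noteq> 0"
    then show "\<exists>H\<in>I. homog e H \<and> H \<noteq> 0 \<and>
        lead_mon (refine (wt (act_wt g w1)) (\<lambda>a b. \<tau> (act_mon g a) (act_mon g b))) H =
        lead_mon (refine (wt (act_wt g w1)) (\<lambda>a b. \<tau> (act_mon g a) (act_mon g b))) F \<and>
        init_form (act_wt g w1) H \<in> init_ideal (act_wt g w2) I"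
      using lead_mon_transport[OF G I eq \<tau> _ _ _ f(3)] init_form_in_init_ideal by metis
  qed
qed

lemma init_ideal_act_wt_eq:
  fixes G :: "('n::finite \<Rightarrow> 'n) set" and I :: "('n, 'k::field) mpoly set"
  assumes "perm_group G" "acts_monomially_upto G I d" "g \<in> G"
    and "homogeneous_ideal I" "\<forall>J\<in>monomial_initial_ideals I. generated_in_degrees_le J d"
    and "init_ideal w1 I = init_ideal w2 I"
  shows "init_ideal (act_wt g w1) I = init_ideal (act_wt g w2) I"
  using init_ideal_act_wt_subset[OF assms] init_ideal_act_wt_subset[OF assms(1-5) assms(6)[symmetric]]
  by (rule antisym)

lemma act_wt_Ccone:
  fixes G :: "('n::finite \<Rightarrow> 'n) set" and I :: "('n, 'k::field) mpoly set"
  assumes G: "perm_group G" "acts_monomially_upto G I d" "g \<in> G"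
    and I: "homogeneous_ideal I" "\<forall>J\<in>monomial_initial_ideals I. generated_in_degrees_le J d"
  shows "act_wt g ` Ccone I w = Ccone I (act_wt g w)"
proof
  have g: "bij g" using G(1,3) by (rule perm_group_bij)
  show "act_wt g ` Ccone I w \<subseteq> Ccone I (act_wt g w)"
  proof
    fix y assume "y \<in> act_wt g ` Ccone I w"
    then obtain x where x: "init_ideal x I = init_ideal w I" "y = act_wt g x"
      unfolding Ccone_def by blast
    then show "y \<in> Ccone I (act_wt g w)"
      unfolding Ccone_def using init_ideal_act_wt_eq[OF G I x(1)] by simp
  qed
  show "Ccone I (act_wt g w) \<subseteq> act_wt g ` Ccone I w"
  proof
    fix y assume "y \<in> Ccone I (act_wt g w)"
    then have "init_ideal (act_wt (inv g) y) I = init_ideal (act_wt (inv g) (act_wt g w)) I"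
      unfolding Ccone_def by (intro init_ideal_act_wt_eq[OF G(1,2) perm_group_inv[OF G(1,3)] I]) simp
    then have "act_wt (inv g) y \<in> Ccone I w"
      unfolding Ccone_def act_wt_inv_cancel(2)[OF g] by simp
    then show "y \<in> act_wt g ` Ccone I w"
      by (rule image_eqI[where f = "act_wt g", OF act_wt_inv_cancel(1)[OF g, of y, symmetric]])
  qed
qed

lemma act_wt_groebner_fan:
  fixes I :: "('n::finite, 'k::comm_ring_1) mpoly set"
  assumes g: "bij g" and Ccone: "\<And>w. act_wt g ` Ccone I w = Ccone I (act_wt g w)"
  shows "(\<lambda>F. act_wt g ` F) ` groebner_fan I = groebner_fan I"
proof -
  have "inj (act_wt g :: real ^ 'n \<Rightarrow> real ^ 'n)"
    by (rule injI) (metis act_wt_inv_cancel(2)[OF g])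
  then have closure: "act_wt g ` closure (Ccone I w) = closure (Ccone I (act_wt g w))" for w
    unfolding Ccone[symmetric] by (rule closure_injective_linear_image[OF linear_act_wt])
  show ?thesis
  proof
    show "(\<lambda>F. act_wt g ` F) ` groebner_fan I \<subseteq> groebner_fan I"
      unfolding groebner_fan_def using closure by auto
    show "groebner_fan I \<subseteq> (\<lambda>F. act_wt g ` F) ` groebner_fan I"
    proof
      fix F assume "F \<in> groebner_fan I"
      then obtain w where "F = closure (Ccone I w)" unfolding groebner_fan_def by blast
      then have "F = act_wt g ` closure (Ccone I (act_wt (inv g) w))"
        by (simp add: closure act_wt_inv_cancel(1)[OF g])
      then show "F \<in> (\<lambda>F. act_wt g ` F) ` groebner_fan I"
        unfolding groebner_fan_def by blast
    qed
  qed
qed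

theorem mainTheorem11:
  fixes G :: "('n::finite \<Rightarrow> 'n) set"
    and I :: "('n, 'k::field) mpoly set"
    and d :: nat
  assumes "perm_group G"
    and "homogeneous_ideal I"
    and "\<forall>J\<in>monomial_initial_ideals I. generated_in_degrees_le J d"
    and "acts_monomially_upto G I d"
  shows "\<forall>g\<in>G. (\<forall>w. \<exists>w'. act_wt g ` Ccone I w = Ccone I w')
               \<and> (\<lambda>F. act_wt g ` F) ` groebner_fan I = groebner_fan I"
proof (intro ballI conjI allI)
  fix g assume g: "g \<in> G"
  have Ccone: "act_wt g ` Ccone I w = Ccone I (act_wt g w)" for w
    using act_wt_Ccone[OF assms(1,4) g assms(2,3)] .
  then show "\<exists>w'. act_wt g ` Ccone I w = Ccone I w'" for w
    by blast
  show "(\<lambda>F. act_wt g ` F) ` groebner_fan I = groebner_fan I"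
    using perm_group_bij[OF assms(1) g] Ccone by (rule act_wt_groebner_fan)
qed

end
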